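(* Let $\Omega\subset\mathbb{R}^n$ be Lebesgue measurable with finite measure and let $f:L^2(\Omega)\to\mathbb{R}$ satisfy Assumption A with Lipschitz constant $L_f$ of $\nabla f$, and assume additionally that $\nabla f:L^2(\Omega)\to L^2(\Omega)$ is completely continuous. Let $\alpha>0$, $\beta>0$, $p\in(0,1)$, $b\in(0,\infty]$, and let $L$ satisfy $L_f<L\le(\tfrac2p-1)\alpha$. Let $u_0\in L^2(\Omega)$ and let $(u_k)$ be any sequence such that for every $k\ge0$, $u_{k+1}$ is a global minimizer of \[ \min_{u\in L^2(\Omega),\ |u(x)|\le b\text{ a.e.}}\ f(u_k)+\int_\Omega\nabla f(u_k)(u-u_k)\,dx+\frac L2\|u-u_k\|_{L^2(\Omega)}^2+\frac\alpha2\|u\|_{L^2(\Omega)}^2+\beta\int_\Omega|u(x)|^p\,dx . \] Then every weak sequential limit point $u^*\in L^2(\Omega)$ of $(u_k)$ is a strong sequential limit point of $(u_k)$ in $L^1(\Omega)$.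
   Context: Assumption A: $f:L^2(\Omega)\to\mathbb{R}$ is bounded from below, weakly lower semicontinuous, Fréchet differentiable, and $\nabla f:L^2(\Omega)\to L^2(\Omega)$ is Lipschitz continuous with constant $L_f$. Completely continuous means: $u_n\rightharpoonup u$ weakly in $L^2(\Omega)$ implies $\nabla f(u_n)\to\nabla f(u)$ strongly in $L^2(\Omega)$. For $b=\infty$ the constraint $|u|\le b$ is void. *)

theory Defs
  imports "HOL-Analysis.Analysis"
begin

(* L^2(Omega) represented by square-integrable Lebesgue measurable representatives
   u :: 'a => real on the measure space lebesgue_on Omega. *)
definition L2 :: "'a::euclidean_space set \<Rightarrow> ('a \<Rightarrow> real) set" where
  "L2 \<Omega> = {u. u \<in> borel_measurable (lebesgue_on \<Omega>) \<and>
                integrable (lebesgue_on \<Omega>) (\<lambda>x. (u x)\<^sup>2)}"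

definition l2_inner :: "'a::euclidean_space set \<Rightarrow> ('a \<Rightarrow> real) \<Rightarrow> ('a \<Rightarrow> real) \<Rightarrow> real" where
  "l2_inner \<Omega> u v = (LINT x|lebesgue_on \<Omega>. u x * v x)"

definition l2_norm :: "'a::euclidean_space set \<Rightarrow> ('a \<Rightarrow> real) \<Rightarrow> real" where
  "l2_norm \<Omega> u = sqrt (LINT x|lebesgue_on \<Omega>. (u x)\<^sup>2)"

definition l1_dist :: "'a::euclidean_space set \<Rightarrow> ('a \<Rightarrow> real) \<Rightarrow> ('a \<Rightarrow> real) \<Rightarrow> real" where
  "l1_dist \<Omega> u v = (LINT x|lebesgue_on \<Omega>. \<bar>u x - v x\<bar>)"

definition weak_conv_L2 :: "'a::euclidean_space set \<Rightarrow> (nat \<Rightarrow> 'a \<Rightarrow> real) \<Rightarrow> ('a \<Rightarrow> real) \<Rightarrow> bool" where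
  "weak_conv_L2 \<Omega> us u \<longleftrightarrow> (\<forall>n. us n \<in> L2 \<Omega>) \<and> u \<in> L2 \<Omega> \<and>
     (\<forall>v\<in>L2 \<Omega>. (\<lambda>n. l2_inner \<Omega> (us n) v) \<longlonglongrightarrow> l2_inner \<Omega> u v)"

definition assumption_A ::
  "'a::euclidean_space set \<Rightarrow> (('a \<Rightarrow> real) \<Rightarrow> real) \<Rightarrow> (('a \<Rightarrow> real) \<Rightarrow> 'a \<Rightarrow> real) \<Rightarrow> real \<Rightarrow> bool" where
  "assumption_A \<Omega> f g Lf \<longleftrightarrow>
     (\<exists>c. \<forall>u\<in>L2 \<Omega>. c \<le> f u) \<and>
     (\<forall>us u. weak_conv_L2 \<Omega> us u \<longrightarrow> ereal (f u) \<le> liminf (\<lambda>n. ereal (f (us n)))) \<and>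
     (\<forall>u\<in>L2 \<Omega>. g u \<in> L2 \<Omega> \<and>
        (\<forall>\<epsilon>>0. \<exists>\<delta>>0. \<forall>v\<in>L2 \<Omega>. l2_norm \<Omega> (\<lambda>x. v x - u x) < \<delta> \<longrightarrow>
            \<bar>f v - f u - l2_inner \<Omega> (g u) (\<lambda>x. v x - u x)\<bar> \<le> \<epsilon> * l2_norm \<Omega> (\<lambda>x. v x - u x))) \<and>
     (\<forall>u\<in>L2 \<Omega>. \<forall>v\<in>L2 \<Omega>.
        l2_norm \<Omega> (\<lambda>x. g u x - g v x) \<le> Lf * l2_norm \<Omega> (\<lambda>x. u x - v x))"

definition completely_continuous ::
  "'a::euclidean_space set \<Rightarrow> (('a \<Rightarrow> real) \<Rightarrow> 'a \<Rightarrow> real) \<Rightarrow> bool" where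
  "completely_continuous \<Omega> g \<longleftrightarrow>
     (\<forall>us u. weak_conv_L2 \<Omega> us u \<longrightarrow> (\<lambda>n. l2_norm \<Omega> (\<lambda>x. g (us n) x - g u x)) \<longlonglongrightarrow> 0)"

definition subproblem_obj ::
  "'a::euclidean_space set \<Rightarrow> (('a \<Rightarrow> real) \<Rightarrow> real) \<Rightarrow> (('a \<Rightarrow> real) \<Rightarrow> 'a \<Rightarrow> real) \<Rightarrow>
   real \<Rightarrow> real \<Rightarrow> real \<Rightarrow> real \<Rightarrow> ('a \<Rightarrow> real) \<Rightarrow> ('a \<Rightarrow> real) \<Rightarrow> real" where
  "subproblem_obj \<Omega> f g L \<alpha> \<beta> p w u =
     f w + l2_inner \<Omega> (g w) (\<lambda>x. u x - w x) + L / 2 * (l2_norm \<Omega> (\<lambda>x. u x - w x))\<^sup>2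
     + \<alpha> / 2 * (l2_norm \<Omega> u)\<^sup>2 + \<beta> * (LINT x|lebesgue_on \<Omega>. \<bar>u x\<bar> powr p)"

(* admissible set; b = \<infinity> means no constraint *)
definition admissible :: "'a::euclidean_space set \<Rightarrow> ereal \<Rightarrow> ('a \<Rightarrow> real) set" where
  "admissible \<Omega> b = {u \<in> L2 \<Omega>. AE x in lebesgue_on \<Omega>. ereal \<bar>u x\<bar> \<le> b}"

end

theory Submission
  imports Defs
begin

text \<open>
  For \<open>F = f + \<alpha>/2 \<parallel>\<cdot>\<parallel>\<^sup>2 + \<beta> \<integral>\<bar>\<cdot>\<bar>\<^sup>p\<close> the descent lemma gives the sufficient decrease
  \<open>F(u\<^sub>k\<^sub>+\<^sub>1) + (L - L\<^sub>f)/2 \<parallel>u\<^sub>k\<^sub>+\<^sub>1 - u\<^sub>k\<parallel>\<^sup>2 \<le> F(u\<^sub>k)\<close>, so the steps are square summable: they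
  tend to \<open>0\<close> in \<open>L\<^sup>2\<close> and almost everywhere, and the iterates are bounded in \<open>L\<^sup>2\<close>.
  The subproblem decouples: for almost every \<open>x\<close>, \<open>u\<^sub>k\<^sub>+\<^sub>1(x)\<close> minimises over \<open>[-b, b]\<close> a scalar
  function whose data are \<open>u\<^sub>k(x)\<close> and \<open>\<nabla>f(u\<^sub>k)(x)\<close>. Because \<open>L \<le> (2/p - 1) \<alpha>\<close>, a nonzero scalar
  minimiser is unique on each half line, has modulus at least some \<open>m > 0\<close>, and depends
  continuously on the data; hence the sign of \<open>u\<^sub>k(x)\<close> eventually freezes.
  If \<open>u\<^sup>*\<close> is a weak limit point, the iterates just before the subsequence also converge weakly to
  \<open>u\<^sup>*\<close>, complete continuity makes \<open>\<nabla>f\<close> converge strongly along them and hence almost everywhere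
  along a further subsequence, and then the following iterates converge almost everywhere.
  Being bounded in \<open>L\<^sup>2\<close> on a set of finite measure, they converge in \<open>L\<^sup>1\<close>, and their limit
  must be the weak limit \<open>u\<^sup>*\<close>.
\<close>

section \<open>Real sequences and integrals\<close>

lemma abs_powr_le_one_plus_square:
  fixes y p :: real
  assumes "0 \<le> p" "p \<le> 1"
  shows "\<bar>y\<bar> powr p \<le> 1 + y\<^sup>2"
proof (cases "\<bar>y\<bar> \<le> 1")
  case True
  then have "\<bar>y\<bar> powr p \<le> 1 powr p" using assms by (intro powr_mono2) auto
  then show ?thesis by (simp add: add_increasing2)
next
  case False
  then have "\<bar>y\<bar> powr p \<le> \<bar>y\<bar> powr 1" using assms by (intro powr_mono) auto
  also have "\<dots> = \<bar>y\<bar> * 1" by simp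
  also have "\<dots> \<le> \<bar>y\<bar> * \<bar>y\<bar>" using False by (intro mult_left_mono) auto
  also have "\<dots> = y\<^sup>2" by (simp add: power2_eq_square)
  finally show ?thesis by simp
qed

lemma abs_le_min_plus_square_div:
  fixes y K :: real
  assumes "K > 0"
  shows "\<bar>y\<bar> \<le> min \<bar>y\<bar> K + y\<^sup>2 / K"
proof (cases "\<bar>y\<bar> \<le> K")
  case False
  then have "K * \<bar>y\<bar> \<le> \<bar>y\<bar> * \<bar>y\<bar>" by (intro mult_right_mono) auto
  then have "\<bar>y\<bar> \<le> y\<^sup>2 / K" using assms by (simp add: field_simps power2_eq_square)
  moreover have "min \<bar>y\<bar> K = K" using False by simp
  ultimately show ?thesis using assms by linarith
qed (use assms in simp)

lemma sgn_eq_if_close: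
  fixes a b m :: real
  assumes "a = 0 \<or> m \<le> \<bar>a\<bar>" "b = 0 \<or> m \<le> \<bar>b\<bar>" "\<bar>b - a\<bar> < m"
  shows "sgn b = sgn a"
proof -
  have "\<not> (a > 0 \<and> b \<le> 0) \<and> \<not> (a < 0 \<and> b \<ge> 0) \<and> \<not> (a = 0 \<and> b \<noteq> 0)"
    using assms by auto
  then show ?thesis by (cases a "0::real" rule: linorder_cases) (auto simp: sgn_real_def)
qed

lemma eventually_sgn_constant:
  fixes v :: "nat \<Rightarrow> real"
  assumes gap: "\<And>k. k \<ge> 1 \<Longrightarrow> v k = 0 \<or> m \<le> \<bar>v k\<bar>" and m: "m > 0"
    and steps: "(\<lambda>k. v (Suc k) - v k) \<longlonglongrightarrow> 0"
  shows "\<exists>N. \<forall>n\<ge>N. sgn (v n) = sgn (v N)"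
proof -
  obtain N0 where N0: "\<And>k. k \<ge> N0 \<Longrightarrow> \<bar>v (Suc k) - v k\<bar> < m"
    using LIMSEQ_D[OF steps m] by auto
  have "sgn (v n) = sgn (v (Suc N0))" if "n \<ge> Suc N0" for n
    using that
  proof (induction n rule: dec_induct)
    case (step n)
    then show ?case using sgn_eq_if_close[OF gap gap N0, of n] by simp
  qed simp
  then show ?thesis by blast
qed

lemma LIMSEQ_if_bounded_and_subseq_limits_eq:
  fixes S :: "nat \<Rightarrow> 'a::heine_borel"
  assumes bounded: "bounded (range S)"
    and limits: "\<And>r l. strict_mono r \<Longrightarrow> (S \<circ> r) \<longlonglongrightarrow> l \<Longrightarrow> l = l0"
  shows "S \<longlonglongrightarrow> l0"
proof (rule ccontr)
  assume "\<not> S \<longlonglongrightarrow> l0"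
  then obtain e where e: "e > 0" and far: "\<And>N. \<exists>n\<ge>N. \<not> dist (S n) l0 < e"
    unfolding LIMSEQ_def by blast
  have "infinite {n. e \<le> dist (S n) l0}"
    unfolding infinite_nat_iff_unbounded_le
  proof
    fix N
    obtain n where "n \<ge> N" "\<not> dist (S n) l0 < e" using far by blast
    then show "\<exists>n\<ge>N. n \<in> {n. e \<le> dist (S n) l0}" by auto
  qed
  then obtain r :: "nat \<Rightarrow> nat" where r: "strict_mono r" and r_far: "\<And>n. e \<le> dist (S (r n)) l0"
    using infinite_enumerate by blast
  have "bounded (range (S \<circ> r))"
    using bounded by (rule bounded_subset) auto
  then obtain l r' where r': "strict_mono r'" and lim: "((S \<circ> r) \<circ> r') \<longlonglongrightarrow> l"
    using bounded_imp_convergent_subsequence by blast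
  have "l = l0"
    using limits[OF strict_mono_o[OF r r']] lim by (simp add: comp_assoc)
  moreover have "e \<le> dist l l0"
    using r_far by (intro LIMSEQ_le_const[OF tendsto_dist[OF lim tendsto_const]]) auto
  ultimately show False using e by simp
qed

lemma rational_approximation_abs_le:
  fixes t :: real
  obtains T where "\<And>n. T n \<in> \<rat>" "\<And>n. \<bar>T n\<bar> \<le> \<bar>t\<bar>" "T \<longlonglongrightarrow> t"
proof (cases "t = 0")
  case True
  then show ?thesis using that[of "\<lambda>n. 0"] by simp
next
  case False
  have "\<forall>n. \<exists>q\<in>\<rat>. max 0 (\<bar>t\<bar> - 1 / Suc n) < q \<and> q < \<bar>t\<bar>"
    using False by (intro allI Rats_dense_in_real) simp
  then obtain R where R: "\<And>n. R n \<in> \<rat>" "\<And>n. max 0 (\<bar>t\<bar> - 1 / Suc n) < R n" "\<And>n. R n < \<bar>t\<bar>"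
    by metis
  have R_lim: "R \<longlonglongrightarrow> \<bar>t\<bar>"
  proof (rule tendsto_sandwich[of "\<lambda>n. \<bar>t\<bar> - 1 / Suc n" _ _ "\<lambda>n. \<bar>t\<bar>"])
    show "\<forall>\<^sub>F n in sequentially. \<bar>t\<bar> - 1 / Suc n \<le> R n"
      using R(2) by (intro always_eventually allI) (smt (verit) max.cobounded2)
    show "\<forall>\<^sub>F n in sequentially. R n \<le> \<bar>t\<bar>"
      using R(3) by (intro always_eventually allI) (simp add: less_imp_le)
    have "(\<lambda>n. 1 / real (Suc n)) \<longlonglongrightarrow> 0" by (rule LIMSEQ_Suc[OF lim_const_over_n])
    then show "(\<lambda>n. \<bar>t\<bar> - 1 / real (Suc n)) \<longlonglongrightarrow> \<bar>t\<bar>"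
      using tendsto_diff[OF tendsto_const[of "\<bar>t\<bar>"]] by fastforce
  qed simp
  have R_pos: "R n > 0" for n using R(2)[of n] by simp
  show ?thesis
  proof (rule that[of "\<lambda>n. if t > 0 then R n else - R n"])
    show "(if t > 0 then R n else - R n) \<in> \<rat>" for n using R(1) by simp
    show "\<bar>if t > 0 then R n else - R n\<bar> \<le> \<bar>t\<bar>" for n using R(3)[of n] R_pos[of n] by auto
    show "(\<lambda>n. if t > 0 then R n else - R n) \<longlonglongrightarrow> t"
      using R_lim tendsto_minus[OF R_lim] False by (cases "t > 0") auto
  qed
qed

lemma AE_tendsto_zero_if_summable_square_integrals:
  fixes h :: "nat \<Rightarrow> 'x \<Rightarrow> real"
  assumes [measurable]: "\<And>k. h k \<in> borel_measurable M"
    and int: "\<And>k. integrable M (\<lambda>x. (h k x)\<^sup>2)"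
    and summable: "summable (\<lambda>k. \<integral>x. (h k x)\<^sup>2 \<partial>M)"
  shows "AE x in M. (\<lambda>k. h k x) \<longlonglongrightarrow> 0"
proof -
  have "(\<integral>\<^sup>+x. (\<Sum>k. ennreal ((h k x)\<^sup>2)) \<partial>M) = (\<Sum>k. \<integral>\<^sup>+x. ennreal ((h k x)\<^sup>2) \<partial>M)"
    by (rule nn_integral_suminf) measurable
  also have "\<dots> = (\<Sum>k. ennreal (\<integral>x. (h k x)\<^sup>2 \<partial>M))"
    by (intro suminf_cong nn_integral_eq_integral int) auto
  also have "\<dots> = ennreal (\<Sum>k. \<integral>x. (h k x)\<^sup>2 \<partial>M)"
    by (rule suminf_ennreal2) (use summable in auto)
  finally have "(\<integral>\<^sup>+x. (\<Sum>k. ennreal ((h k x)\<^sup>2)) \<partial>M) \<noteq> \<infinity>" by simp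
  then have "AE x in M. (\<Sum>k. ennreal ((h k x)\<^sup>2)) \<noteq> \<infinity>"
    by (intro nn_integral_PInf_AE) measurable
  then show ?thesis
  proof (rule eventually_mono)
    fix x assume "(\<Sum>k. ennreal ((h k x)\<^sup>2)) \<noteq> \<infinity>"
    then have "(\<lambda>k. (h k x)\<^sup>2) \<longlonglongrightarrow> 0"
      by (intro summable_LIMSEQ_zero summable_suminf_not_top) auto
    then have "(\<lambda>k. sqrt ((h k x)\<^sup>2)) \<longlonglongrightarrow> 0" using tendsto_real_sqrt by fastforce
    then show "(\<lambda>k. h k x) \<longlonglongrightarrow> 0" by (simp add: tendsto_rabs_zero_iff)
  qed
qed

lemma square_integrable_of_AE_limit:
  fixes h :: "nat \<Rightarrow> 'x \<Rightarrow> real"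
  assumes [measurable]: "\<And>n. h n \<in> borel_measurable M" "V \<in> borel_measurable M"
    and lim: "AE x in M. (\<lambda>n. h n x) \<longlonglongrightarrow> V x"
    and int: "\<And>n. integrable M (\<lambda>x. (h n x)\<^sup>2)"
    and bound: "\<And>n. (\<integral>x. (h n x)\<^sup>2 \<partial>M) \<le> B"
  shows "integrable M (\<lambda>x. (V x)\<^sup>2)"
proof (rule integrableI_nonneg)
  have "(\<integral>\<^sup>+x. ennreal ((V x)\<^sup>2) \<partial>M) = (\<integral>\<^sup>+x. liminf (\<lambda>n. ennreal ((h n x)\<^sup>2)) \<partial>M)"
    using lim
  proof (intro nn_integral_cong_AE, elim eventually_mono)
    fix x assume "(\<lambda>n. h n x) \<longlonglongrightarrow> V x"
    then have "(\<lambda>n. ennreal ((h n x)\<^sup>2)) \<longlonglongrightarrow> ennreal ((V x)\<^sup>2)"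
      by (intro tendsto_ennrealI tendsto_intros)
    then show "ennreal ((V x)\<^sup>2) = liminf (\<lambda>n. ennreal ((h n x)\<^sup>2))"
      by (intro lim_imp_Liminf[symmetric]) simp_all
  qed
  also have "\<dots> \<le> liminf (\<lambda>n. \<integral>\<^sup>+x. ennreal ((h n x)\<^sup>2) \<partial>M)"
    by (rule nn_integral_liminf) measurable
  also have "\<dots> \<le> liminf (\<lambda>n. ennreal B)"
    using int bound
    by (intro Liminf_mono always_eventually allI) (simp add: nn_integral_eq_integral ennreal_leI)
  also have "\<dots> < \<infinity>" by (simp add: Liminf_const)
  finally show "(\<integral>\<^sup>+x. ennreal ((V x)\<^sup>2) \<partial>M) < \<infinity>" .
qed auto

lemma integral_abs_le_truncation:
  fixes h :: "'x \<Rightarrow> real"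
  assumes fin: "finite_measure M" and [measurable]: "h \<in> borel_measurable M"
    and int: "integrable M (\<lambda>x. (h x)\<^sup>2)" and K: "K > 0"
  shows "(\<integral>x. \<bar>h x\<bar> \<partial>M) \<le> (\<integral>x. min \<bar>h x\<bar> K \<partial>M) + (\<integral>x. (h x)\<^sup>2 \<partial>M) / K"
proof -
  have truncated_int: "integrable M (\<lambda>x. min \<bar>h x\<bar> K)"
  proof (rule Bochner_Integration.integrable_bound[where f="\<lambda>x. K"])
    show "integrable M (\<lambda>x. K)" using finite_measure.integrable_const[OF fin] .
    show "AE x in M. norm (min \<bar>h x\<bar> K) \<le> norm K" using K by (intro AE_I2) auto
  qed measurable
  have h_int: "integrable M h"
    using finite_measure.square_integrable_imp_integrable[OF fin _ int] by simp
  have "(\<integral>x. \<bar>h x\<bar> \<partial>M) \<le> (\<integral>x. min \<bar>h x\<bar> K + (h x)\<^sup>2 / K \<partial>M)"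
    using truncated_int int h_int abs_le_min_plus_square_div[OF K] by (intro integral_mono) auto
  also have "\<dots> = (\<integral>x. min \<bar>h x\<bar> K \<partial>M) + (\<integral>x. (h x)\<^sup>2 \<partial>M) / K"
    using truncated_int int by simp
  finally show ?thesis .
qed

lemma tendsto_L1_if_AE_tendsto_and_square_bounded:
  fixes h :: "nat \<Rightarrow> 'x \<Rightarrow> real"
  assumes fin: "finite_measure M"
    and [measurable]: "\<And>n. h n \<in> borel_measurable M"
    and lim: "AE x in M. (\<lambda>n. h n x) \<longlonglongrightarrow> 0"
    and int: "\<And>n. integrable M (\<lambda>x. (h n x)\<^sup>2)"
    and bound: "\<And>n. (\<integral>x. (h n x)\<^sup>2 \<partial>M) \<le> C"
  shows "(\<lambda>n. \<integral>x. \<bar>h n x\<bar> \<partial>M) \<longlonglongrightarrow> 0"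
proof (rule tendstoI)
  fix \<epsilon> :: real assume \<epsilon>: "\<epsilon> > 0"
  have "0 \<le> (\<integral>x. (h 0 x)\<^sup>2 \<partial>M)" by (rule integral_nonneg_AE) simp
  then have "C \<ge> 0" using bound[of 0] by linarith
  \<comment> \<open>Truncation at height \<open>K\<close> costs at most \<open>C / K < \<epsilon> / 2\<close>.\<close>
  define K where "K = 2 * C / \<epsilon> + 1"
  have K: "K > 0" unfolding K_def using \<open>C \<ge> 0\<close> \<epsilon> by (simp add: add_nonneg_pos)
  have "2 * C < \<epsilon> * K" unfolding K_def using \<epsilon> by (simp add: field_simps)
  then have CK: "C / K < \<epsilon> / 2" using K \<epsilon> by (simp add: field_simps)
  have "(\<lambda>n. \<integral>x. min \<bar>h n x\<bar> K \<partial>M) \<longlonglongrightarrow> (\<integral>x. 0 \<partial>M)"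
  proof (rule integral_dominated_convergence[where w="\<lambda>x. K"])
    show "AE x in M. (\<lambda>n. min \<bar>h n x\<bar> K) \<longlonglongrightarrow> 0"
      using lim
    proof (rule eventually_mono)
      fix x assume "(\<lambda>n. h n x) \<longlonglongrightarrow> 0"
      then have "(\<lambda>n. min \<bar>h n x\<bar> K) \<longlonglongrightarrow> min \<bar>0\<bar> K" by (intro tendsto_intros)
      then show "(\<lambda>n. min \<bar>h n x\<bar> K) \<longlonglongrightarrow> 0" using K by simp
    qed
    show "\<And>n. AE x in M. norm (min \<bar>h n x\<bar> K) \<le> K" using K by (intro AE_I2) auto
    show "integrable M (\<lambda>x. K)" using finite_measure.integrable_const[OF fin] .
  qed measurable
  then have "(\<lambda>n. \<integral>x. min \<bar>h n x\<bar> K \<partial>M) \<longlonglongrightarrow> 0" by simp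
  then have "\<forall>\<^sub>F n in sequentially. (\<integral>x. min \<bar>h n x\<bar> K \<partial>M) < \<epsilon> / 2"
    by (rule order_tendstoD(2)) (use \<epsilon> in simp)
  then show "\<forall>\<^sub>F n in sequentially. dist (\<integral>x. \<bar>h n x\<bar> \<partial>M) 0 < \<epsilon>"
  proof (rule eventually_mono)
    fix n assume "(\<integral>x. min \<bar>h n x\<bar> K \<partial>M) < \<epsilon> / 2"
    moreover have "(\<integral>x. (h n x)\<^sup>2 \<partial>M) / K \<le> C / K"
      using bound[of n] K by (simp add: divide_right_mono)
    moreover have "(\<integral>x. \<bar>h n x\<bar> \<partial>M) \<le> (\<integral>x. min \<bar>h n x\<bar> K \<partial>M) + (\<integral>x. (h n x)\<^sup>2 \<partial>M) / K"
      by (rule integral_abs_le_truncation[OF fin _ int K]) measurable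
    ultimately have "(\<integral>x. \<bar>h n x\<bar> \<partial>M) < \<epsilon>" using CK by linarith
    then show "dist (\<integral>x. \<bar>h n x\<bar> \<partial>M) 0 < \<epsilon>" by simp
  qed
qed

section \<open>Square-integrable functions on a domain of finite measure\<close>

abbreviation sq_integral :: "'a::euclidean_space set \<Rightarrow> ('a \<Rightarrow> real) \<Rightarrow> real" where
  "sq_integral \<Omega> u \<equiv> LINT x|lebesgue_on \<Omega>. (u x)\<^sup>2"

lemma l2_norm_nonneg: "l2_norm \<Omega> u \<ge> 0"
  unfolding l2_norm_def by simp

lemma l2_norm_power2: "(l2_norm \<Omega> u)\<^sup>2 = sq_integral \<Omega> u"
  unfolding l2_norm_def by simp

lemma l2_norm_scale: "l2_norm \<Omega> (\<lambda>x. h * d x) = \<bar>h\<bar> * l2_norm \<Omega> d"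
  unfolding l2_norm_def by (simp add: power_mult_distrib real_sqrt_mult)

lemma l2_inner_scale_right: "l2_inner \<Omega> a (\<lambda>x. h * d x) = h * l2_inner \<Omega> a d"
  unfolding l2_inner_def by (simp add: mult.left_commute)

lemma weak_conv_L2_subseq:
  assumes "weak_conv_L2 \<Omega> us w" "strict_mono r"
  shows "weak_conv_L2 \<Omega> (us \<circ> r) w"
  using assms unfolding weak_conv_L2_def
proof (intro conjI ballI allI)
  assume weak: "(\<forall>n. us n \<in> L2 \<Omega>) \<and> w \<in> L2 \<Omega> \<and>
      (\<forall>v\<in>L2 \<Omega>. (\<lambda>n. l2_inner \<Omega> (us n) v) \<longlonglongrightarrow> l2_inner \<Omega> w v)"
  then show "(us \<circ> r) n \<in> L2 \<Omega>" "w \<in> L2 \<Omega>" for n by simp_all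
  fix v assume "v \<in> L2 \<Omega>"
  then have "((\<lambda>n. l2_inner \<Omega> (us n) v) \<circ> r) \<longlonglongrightarrow> l2_inner \<Omega> w v"
    using weak LIMSEQ_subseq_LIMSEQ[OF _ assms(2)] by blast
  then show "(\<lambda>n. l2_inner \<Omega> ((us \<circ> r) n) v) \<longlonglongrightarrow> l2_inner \<Omega> w v" by (simp add: o_def)
qed

locale finite_domain =
  fixes \<Omega> :: "'a::euclidean_space set"
  assumes finite_measure_on: "finite_measure (lebesgue_on \<Omega>)"
begin

lemma l1_dist_eq_0_if_null:
  assumes "measure (lebesgue_on \<Omega>) \<Omega> = 0"
  shows "l1_dist \<Omega> u v = 0"
proof -
  have "space (lebesgue_on \<Omega>) \<in> null_sets (lebesgue_on \<Omega>)"
    using assms finite_measure.emeasure_eq_measure[OF finite_measure_on] by (simp add: null_sets_def)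
  then have "AE x in lebesgue_on \<Omega>. False" by (rule AE_I') auto
  then show ?thesis
    unfolding l1_dist_def by (intro integral_eq_zero_AE) (auto elim: eventually_mono)
qed

lemma L2_measurable: "u \<in> L2 \<Omega> \<Longrightarrow> u \<in> borel_measurable (lebesgue_on \<Omega>)"
  by (simp add: L2_def)

lemma L2_square_integrable: "u \<in> L2 \<Omega> \<Longrightarrow> integrable (lebesgue_on \<Omega>) (\<lambda>x. (u x)\<^sup>2)"
  by (simp add: L2_def)

lemma L2_integrable: "u \<in> L2 \<Omega> \<Longrightarrow> integrable (lebesgue_on \<Omega>) u"
  using finite_measure.square_integrable_imp_integrable[OF finite_measure_on]
    L2_square_integrable L2_measurable by blast

lemma L2_mult_integrable:
  assumes "u \<in> L2 \<Omega>" "v \<in> L2 \<Omega>"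
  shows "integrable (lebesgue_on \<Omega>) (\<lambda>x. u x * v x)"
proof (rule Bochner_Integration.integrable_bound[where f="\<lambda>x. (u x)\<^sup>2 + (v x)\<^sup>2"])
  show "integrable (lebesgue_on \<Omega>) (\<lambda>x. (u x)\<^sup>2 + (v x)\<^sup>2)"
    using assms L2_square_integrable by auto
  show "(\<lambda>x. u x * v x) \<in> borel_measurable (lebesgue_on \<Omega>)"
    using assms L2_measurable by (intro borel_measurable_times) auto
  have "\<bar>a * b\<bar> \<le> a\<^sup>2 + b\<^sup>2" for a b :: real
  proof -
    have "2 * \<bar>a\<bar> * \<bar>b\<bar> \<le> a\<^sup>2 + b\<^sup>2" using sum_squares_bound[of "\<bar>a\<bar>" "\<bar>b\<bar>"] by simp
    moreover have "0 \<le> \<bar>a\<bar> * \<bar>b\<bar>" by simp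
    ultimately show ?thesis unfolding abs_mult by linarith
  qed
  then show "AE x in lebesgue_on \<Omega>. norm (u x * v x) \<le> norm ((u x)\<^sup>2 + (v x)\<^sup>2)"
    by (intro AE_I2) simp
qed

lemma L2_lincomb:
  assumes "u \<in> L2 \<Omega>" "v \<in> L2 \<Omega>"
  shows "(\<lambda>x. a * u x + c * v x) \<in> L2 \<Omega>"
proof -
  have expand: "(\<lambda>x. (a * u x + c * v x)\<^sup>2) =
      (\<lambda>x. a\<^sup>2 * (u x)\<^sup>2 + (2 * a * c) * (u x * v x) + c\<^sup>2 * (v x)\<^sup>2)"
    by (auto simp: power2_eq_square algebra_simps)
  have [measurable]: "u \<in> borel_measurable (lebesgue_on \<Omega>)" "v \<in> borel_measurable (lebesgue_on \<Omega>)"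
    using assms by (auto simp: L2_def)
  show ?thesis unfolding L2_def using assms L2_square_integrable L2_mult_integrable[OF assms]
    by (auto simp: expand)
qed

lemma L2_diff: "u \<in> L2 \<Omega> \<Longrightarrow> v \<in> L2 \<Omega> \<Longrightarrow> (\<lambda>x. u x - v x) \<in> L2 \<Omega>"
  using L2_lincomb[of u v 1 "-1"] by simp

lemma L2_const: "(\<lambda>x. c) \<in> L2 \<Omega>"
  unfolding L2_def using finite_measure.integrable_const[OF finite_measure_on] by auto

lemma L2_abs:
  assumes "u \<in> L2 \<Omega>"
  shows "(\<lambda>x. \<bar>u x\<bar>) \<in> L2 \<Omega>"
proof -
  have [measurable]: "u \<in> borel_measurable (lebesgue_on \<Omega>)" using assms by (rule L2_measurable)
  show ?thesis using L2_square_integrable[OF assms] unfolding L2_def by simp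
qed

lemma L2_if_abs_le:
  assumes [measurable]: "w \<in> borel_measurable (lebesgue_on \<Omega>)"
    and s: "s \<in> L2 \<Omega>" and le: "\<And>x. \<bar>w x\<bar> \<le> c + \<bar>s x\<bar>"
  shows "w \<in> L2 \<Omega>"
  unfolding L2_def
proof (intro CollectI conjI assms(1))
  have [measurable]: "s \<in> borel_measurable (lebesgue_on \<Omega>)" using s by (rule L2_measurable)
  show "integrable (lebesgue_on \<Omega>) (\<lambda>x. (w x)\<^sup>2)"
  proof (rule Bochner_Integration.integrable_bound[where f="\<lambda>x. 2 * c\<^sup>2 + 2 * (s x)\<^sup>2"])
    show "integrable (lebesgue_on \<Omega>) (\<lambda>x. 2 * c\<^sup>2 + 2 * (s x)\<^sup>2)"
      using L2_square_integrable[OF s] finite_measure.integrable_const[OF finite_measure_on, of "2 * c\<^sup>2"]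
      by (intro Bochner_Integration.integrable_add) auto
    show "AE x in lebesgue_on \<Omega>. norm ((w x)\<^sup>2) \<le> norm (2 * c\<^sup>2 + 2 * (s x)\<^sup>2)"
    proof (intro AE_I2)
      fix x
      have "\<bar>w x\<bar>\<^sup>2 \<le> (c + \<bar>s x\<bar>)\<^sup>2"
        using le[of x] by (intro power_mono) auto
      also have "\<dots> \<le> 2 * c\<^sup>2 + 2 * (s x)\<^sup>2"
        using sum_squares_bound[of c "\<bar>s x\<bar>"] by (simp add: power2_sum)
      finally show "norm ((w x)\<^sup>2) \<le> norm (2 * c\<^sup>2 + 2 * (s x)\<^sup>2)" by simp
    qed
  qed measurable
qed

lemma abs_powr_integrable:
  assumes w: "w \<in> L2 \<Omega>" and p: "0 \<le> p" "p \<le> 1"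
  shows "integrable (lebesgue_on \<Omega>) (\<lambda>x. \<bar>w x\<bar> powr p)"
proof (rule Bochner_Integration.integrable_bound[where f="\<lambda>x. 1 + (w x)\<^sup>2"])
  have [measurable]: "w \<in> borel_measurable (lebesgue_on \<Omega>)" using w by (rule L2_measurable)
  show "integrable (lebesgue_on \<Omega>) (\<lambda>x. 1 + (w x)\<^sup>2)"
    using L2_square_integrable[OF w] finite_measure.integrable_const[OF finite_measure_on, of 1]
    by (intro Bochner_Integration.integrable_add)
  show "(\<lambda>x. \<bar>w x\<bar> powr p) \<in> borel_measurable (lebesgue_on \<Omega>)" by measurable
  show "AE x in lebesgue_on \<Omega>. norm (\<bar>w x\<bar> powr p) \<le> norm (1 + (w x)\<^sup>2)"
    using abs_powr_le_one_plus_square p by (intro AE_I2) simp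
qed

lemma l2_inner_diff_left:
  "a \<in> L2 \<Omega> \<Longrightarrow> u \<in> L2 \<Omega> \<Longrightarrow> v \<in> L2 \<Omega> \<Longrightarrow>
    l2_inner \<Omega> (\<lambda>x. u x - v x) a = l2_inner \<Omega> u a - l2_inner \<Omega> v a"
  unfolding l2_inner_def using L2_mult_integrable[of u a] L2_mult_integrable[of v a]
  by (simp add: left_diff_distrib)

lemma l2_cauchy_schwarz:
  assumes "u \<in> L2 \<Omega>" "v \<in> L2 \<Omega>"
  shows "\<bar>l2_inner \<Omega> u v\<bar> \<le> l2_norm \<Omega> u * l2_norm \<Omega> v"
proof -
  define A B C where "A = sq_integral \<Omega> u" and "B = sq_integral \<Omega> v" and "C = l2_inner \<Omega> u v"
  have quadratic: "0 \<le> t\<^sup>2 * A - 2 * t * C + B" for t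
  proof -
    have "(\<lambda>x. (t * u x - v x)\<^sup>2) = (\<lambda>x. t\<^sup>2 * (u x)\<^sup>2 - (2 * t) * (u x * v x) + (v x)\<^sup>2)"
      by (auto simp: power2_eq_square algebra_simps)
    then have "(LINT x|lebesgue_on \<Omega>. (t * u x - v x)\<^sup>2) = t\<^sup>2 * A - 2 * t * C + B"
      using assms L2_square_integrable L2_mult_integrable[OF assms]
      by (simp add: A_def B_def C_def l2_inner_def)
    moreover have "0 \<le> (LINT x|lebesgue_on \<Omega>. (t * u x - v x)\<^sup>2)" by simp
    ultimately show ?thesis by simp
  qed
  have "C\<^sup>2 \<le> A * B"
  proof (cases "A = 0")
    case True
    have "C = 0"
    proof (rule ccontr)
      assume "C \<noteq> 0"
      have "0 \<le> (B + 1) / (2 * C)\<^sup>2 * 0 - 2 * ((B + 1) / (2 * C)) * C + B"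
        using quadratic[of "(B + 1) / (2 * C)"] True by simp
      then show False using \<open>C \<noteq> 0\<close> by (simp add: field_simps)
    qed
    then show ?thesis by (simp add: A_def B_def)
  next
    case False
    then have "A > 0" by (simp add: A_def order_less_le)
    have "0 \<le> (C / A)\<^sup>2 * A - 2 * (C / A) * C + B" by (rule quadratic)
    then have "0 \<le> B - C\<^sup>2 / A" using \<open>A > 0\<close> by (simp add: power2_eq_square field_simps)
    then show ?thesis using \<open>A > 0\<close> by (simp add: field_simps)
  qed
  then have "sqrt (C\<^sup>2) \<le> sqrt (A * B)" by (rule real_sqrt_le_mono)
  moreover have "sqrt (C\<^sup>2) = \<bar>l2_inner \<Omega> u v\<bar>" by (simp add: C_def)
  moreover have "sqrt (A * B) = l2_norm \<Omega> u * l2_norm \<Omega> v"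
    by (simp add: A_def B_def l2_norm_def real_sqrt_mult)
  ultimately show ?thesis by simp
qed

lemma integral_abs_le_l2_norm:
  assumes "u \<in> L2 \<Omega>"
  shows "(LINT x|lebesgue_on \<Omega>. \<bar>u x\<bar>) \<le> l2_norm \<Omega> u * l2_norm \<Omega> (\<lambda>x. 1)"
proof -
  have "(LINT x|lebesgue_on \<Omega>. \<bar>u x\<bar>) = l2_inner \<Omega> (\<lambda>x. \<bar>u x\<bar>) (\<lambda>x. 1)"
    by (simp add: l2_inner_def)
  also have "\<dots> \<le> l2_norm \<Omega> (\<lambda>x. \<bar>u x\<bar>) * l2_norm \<Omega> (\<lambda>x. 1)"
    using l2_cauchy_schwarz[OF L2_abs[OF assms] L2_const[of 1]] by simp
  finally show ?thesis by (simp add: l2_norm_def)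
qed

lemma l2_inner_abs_le_integral_abs:
  assumes h: "h \<in> L2 \<Omega>" and z: "z \<in> L2 \<Omega>" and z_bound: "\<And>x. \<bar>z x\<bar> \<le> 1"
  shows "\<bar>l2_inner \<Omega> h z\<bar> \<le> (LINT x|lebesgue_on \<Omega>. \<bar>h x\<bar>)"
  unfolding l2_inner_def
proof (rule integral_abs_bound_integral)
  show "integrable (lebesgue_on \<Omega>) (\<lambda>x. h x * z x)" by (rule L2_mult_integrable[OF h z])
  show "integrable (lebesgue_on \<Omega>) (\<lambda>x. \<bar>h x\<bar>)" by (rule L2_integrable[OF L2_abs[OF h]])
  show "\<bar>h x * z x\<bar> \<le> \<bar>h x\<bar>" for x
    using mult_left_mono[OF z_bound[of x], of "\<bar>h x\<bar>"] by (simp add: abs_mult)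
qed

lemma weak_conv_L2_perturb:
  assumes weak: "weak_conv_L2 \<Omega> us w" and vs: "\<And>n. vs n \<in> L2 \<Omega>"
    and close: "(\<lambda>n. sq_integral \<Omega> (\<lambda>x. vs n x - us n x)) \<longlonglongrightarrow> 0"
  shows "weak_conv_L2 \<Omega> vs w"
  unfolding weak_conv_L2_def
proof (intro conjI ballI allI vs)
  have us: "\<And>n. us n \<in> L2 \<Omega>" and w: "w \<in> L2 \<Omega>"
    and lim: "\<And>v. v \<in> L2 \<Omega> \<Longrightarrow> (\<lambda>n. l2_inner \<Omega> (us n) v) \<longlonglongrightarrow> l2_inner \<Omega> w v"
    using weak unfolding weak_conv_L2_def by auto
  show "w \<in> L2 \<Omega>" by (rule w)
  fix v assume v: "v \<in> L2 \<Omega>"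
  have "(\<lambda>n. l2_norm \<Omega> (\<lambda>x. vs n x - us n x)) \<longlonglongrightarrow> 0"
    unfolding l2_norm_def using tendsto_real_sqrt[OF close] by simp
  then have "(\<lambda>n. l2_inner \<Omega> (\<lambda>x. vs n x - us n x) v) \<longlonglongrightarrow> 0"
  proof (rule Lim_null_comparison[rotated, OF tendsto_mult_left_zero])
    show "\<forall>\<^sub>F n in sequentially. norm (l2_inner \<Omega> (\<lambda>x. vs n x - us n x) v)
        \<le> l2_norm \<Omega> (\<lambda>x. vs n x - us n x) * l2_norm \<Omega> v"
      using l2_cauchy_schwarz[OF L2_diff[OF vs us] v] by (intro always_eventually allI) simp
  qed
  then have "(\<lambda>n. l2_inner \<Omega> (us n) v + l2_inner \<Omega> (\<lambda>x. vs n x - us n x) v) \<longlonglongrightarrow> l2_inner \<Omega> w v + 0"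
    by (intro tendsto_add lim v)
  then show "(\<lambda>n. l2_inner \<Omega> (vs n) v) \<longlonglongrightarrow> l2_inner \<Omega> w v"
    using l2_inner_diff_left[OF v vs us] by simp
qed

lemma weak_limit_eq_L1_limit:
  assumes weak: "weak_conv_L2 \<Omega> us w" and V: "V \<in> L2 \<Omega>"
    and L1: "(\<lambda>n. LINT x|lebesgue_on \<Omega>. \<bar>us n x - V x\<bar>) \<longlonglongrightarrow> 0"
  shows "AE x in lebesgue_on \<Omega>. V x = w x"
proof -
  have us: "\<And>n. us n \<in> L2 \<Omega>" and w: "w \<in> L2 \<Omega>"
    using weak unfolding weak_conv_L2_def by auto
  have [measurable]: "V \<in> borel_measurable (lebesgue_on \<Omega>)" "w \<in> borel_measurable (lebesgue_on \<Omega>)"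
    using V w by (auto intro: L2_measurable)
  \<comment> \<open>Test the weak convergence against the sign of \<open>V - w\<close>.\<close>
  define z where "z = (\<lambda>x. sgn (V x - w x))"
  have z_bound: "\<bar>z x\<bar> \<le> 1" for x unfolding z_def by (simp add: abs_sgn_eq)
  have [measurable]: "z \<in> borel_measurable (lebesgue_on \<Omega>)" unfolding z_def by measurable
  have z: "z \<in> L2 \<Omega>"
    by (rule L2_if_abs_le[where c=1 and s="\<lambda>x. 0"]) (use z_bound L2_const in auto)
  have "(\<lambda>n. l2_inner \<Omega> (us n) z - l2_inner \<Omega> V z) \<longlonglongrightarrow> 0"
  proof (rule Lim_null_comparison[OF always_eventually L1], intro allI)
    fix n
    have "l2_inner \<Omega> (us n) z - l2_inner \<Omega> V z = l2_inner \<Omega> (\<lambda>x. us n x - V x) z"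
      using l2_inner_diff_left[OF z us V] by simp
    then show "norm (l2_inner \<Omega> (us n) z - l2_inner \<Omega> V z) \<le> (LINT x|lebesgue_on \<Omega>. \<bar>us n x - V x\<bar>)"
      using l2_inner_abs_le_integral_abs[OF L2_diff[OF us V] z z_bound] by simp
  qed
  then have "(\<lambda>n. (l2_inner \<Omega> (us n) z - l2_inner \<Omega> V z) + l2_inner \<Omega> V z) \<longlonglongrightarrow> 0 + l2_inner \<Omega> V z"
    by (intro tendsto_add tendsto_const)
  then have "(\<lambda>n. l2_inner \<Omega> (us n) z) \<longlonglongrightarrow> l2_inner \<Omega> V z" by simp
  moreover have "(\<lambda>n. l2_inner \<Omega> (us n) z) \<longlonglongrightarrow> l2_inner \<Omega> w z"
    using weak z unfolding weak_conv_L2_def by auto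
  ultimately have "l2_inner \<Omega> (\<lambda>x. V x - w x) z = 0"
    using l2_inner_diff_left[OF z V w] LIMSEQ_unique by auto
  moreover have "(V x - w x) * z x = \<bar>V x - w x\<bar>" for x
    unfolding z_def by (cases "V x - w x" "0::real" rule: linorder_cases) auto
  ultimately have "(LINT x|lebesgue_on \<Omega>. \<bar>V x - w x\<bar>) = 0"
    by (simp add: l2_inner_def)
  then have "AE x in lebesgue_on \<Omega>. \<bar>V x - w x\<bar> = 0"
    using integral_nonneg_eq_0_iff_AE[OF L2_integrable[OF L2_abs[OF L2_diff[OF V w]]]] by simp
  then show ?thesis by (rule eventually_mono) simp
qed

lemma admissible_patch:
  assumes s: "s \<in> admissible \<Omega> b" and r: "ereal \<bar>r\<bar> \<le> b"
    and [measurable]: "A \<in> sets (lebesgue_on \<Omega>)"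
  shows "(\<lambda>x. if x \<in> A then r else s x) \<in> admissible \<Omega> b"
proof -
  have sL: "s \<in> L2 \<Omega>" using s by (simp add: admissible_def)
  have [measurable]: "s \<in> borel_measurable (lebesgue_on \<Omega>)" using sL by (rule L2_measurable)
  have "(\<lambda>x. if x \<in> A then r else s x) \<in> L2 \<Omega>"
    by (rule L2_if_abs_le[OF _ sL, of _ "\<bar>r\<bar>"]) auto
  moreover have "AE x in lebesgue_on \<Omega>. ereal \<bar>s x\<bar> \<le> b"
    using s by (simp add: admissible_def)
  then have "AE x in lebesgue_on \<Omega>. ereal \<bar>if x \<in> A then r else s x\<bar> \<le> b"
    by (rule eventually_mono) (use r in auto)
  ultimately show ?thesis by (simp add: admissible_def)
qed

end

lemma finite_domain_if_finite_emeasure: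
  assumes "\<Omega> \<in> sets lebesgue" "emeasure lebesgue \<Omega> < \<infinity>"
  shows "finite_domain \<Omega>"
proof (rule finite_domain.intro)
  have "emeasure (lebesgue_on \<Omega>) \<Omega> = emeasure lebesgue \<Omega>"
    by (rule emeasure_restrict_space) (use assms(1) in auto)
  then show "finite_measure (lebesgue_on \<Omega>)"
    by (intro finite_measureI) (use assms(2) in simp)
qed

section \<open>The descent lemma\<close>

locale smooth_objective = finite_domain \<Omega>
  for \<Omega> :: "'a::euclidean_space set" +
  fixes f :: "('a \<Rightarrow> real) \<Rightarrow> real" and g :: "('a \<Rightarrow> real) \<Rightarrow> 'a \<Rightarrow> real" and Lf :: real
  assumes assumption_A: "assumption_A \<Omega> f g Lf"
begin

lemma bounded_below: "\<exists>c. \<forall>w\<in>L2 \<Omega>. c \<le> f w"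
  using assumption_A unfolding assumption_A_def by blast

lemma gradient_L2: "w \<in> L2 \<Omega> \<Longrightarrow> g w \<in> L2 \<Omega>"
  using assumption_A unfolding assumption_A_def by blast

lemma gradient_lipschitz:
  "w \<in> L2 \<Omega> \<Longrightarrow> w' \<in> L2 \<Omega> \<Longrightarrow>
    l2_norm \<Omega> (\<lambda>x. g w x - g w' x) \<le> Lf * l2_norm \<Omega> (\<lambda>x. w x - w' x)"
  using assumption_A unfolding assumption_A_def by blast

lemma lipschitz_constant_nonneg:
  assumes "measure (lebesgue_on \<Omega>) \<Omega> > 0"
  shows "Lf \<ge> 0"
proof -
  have "0 \<le> l2_norm \<Omega> (\<lambda>x. g (\<lambda>x. 1) x - g (\<lambda>x. 0) x)" by (rule l2_norm_nonneg)
  also have "\<dots> \<le> Lf * l2_norm \<Omega> (\<lambda>x. 1)"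
    using gradient_lipschitz[OF L2_const[of 1] L2_const[of 0]] by simp
  also have "l2_norm \<Omega> (\<lambda>x. 1) = sqrt (measure (lebesgue_on \<Omega>) \<Omega>)"
    unfolding l2_norm_def by simp
  finally show ?thesis using assms by (simp add: zero_le_mult_iff)
qed

lemma frechet_line_derivative:
  assumes w: "w \<in> L2 \<Omega>" and d: "d \<in> L2 \<Omega>"
  shows "((\<lambda>s. f (\<lambda>x. w x + s * d x)) has_real_derivative l2_inner \<Omega> (g w) d) (at 0)"
proof -
  define D where "D = l2_inner \<Omega> (g w) d"
  define nd where "nd = l2_norm \<Omega> d"
  have nd0: "nd \<ge> 0" unfolding nd_def by (rule l2_norm_nonneg)
  have frechet: "\<forall>\<epsilon>>0. \<exists>\<delta>>0. \<forall>v\<in>L2 \<Omega>. l2_norm \<Omega> (\<lambda>x. v x - w x) < \<delta> \<longrightarrow>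
      \<bar>f v - f w - l2_inner \<Omega> (g w) (\<lambda>x. v x - w x)\<bar> \<le> \<epsilon> * l2_norm \<Omega> (\<lambda>x. v x - w x)"
    using assumption_A w unfolding assumption_A_def by blast
  have "(\<lambda>x. w x + 0 * d x) = w" by simp
  then show ?thesis unfolding DERIV_def D_def[symmetric]
  proof (intro tendstoI)
    fix \<epsilon> :: real assume "\<epsilon> > 0"
    define e where "e = \<epsilon> / (2 * (nd + 1))"
    have e0: "e > 0" using \<open>\<epsilon> > 0\<close> nd0 unfolding e_def by (intro divide_pos_pos) auto
    obtain \<delta> where \<delta>: "\<delta> > 0" and remainder: "\<And>v. v \<in> L2 \<Omega> \<Longrightarrow> l2_norm \<Omega> (\<lambda>x. v x - w x) < \<delta> \<Longrightarrow>
        \<bar>f v - f w - l2_inner \<Omega> (g w) (\<lambda>x. v x - w x)\<bar> \<le> e * l2_norm \<Omega> (\<lambda>x. v x - w x)"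
      using frechet e0 by meson
    show "\<forall>\<^sub>F h in at 0. dist ((f (\<lambda>x. w x + (0 + h) * d x) - f (\<lambda>x. w x + 0 * d x)) / h) D < \<epsilon>"
      unfolding eventually_at
    proof (intro exI[of _ "\<delta> / (nd + 1)"] conjI ballI impI)
      show "\<delta> / (nd + 1) > 0" using \<delta> nd0 by simp
      fix h :: real assume h: "h \<noteq> 0 \<and> dist h 0 < \<delta> / (nd + 1)"
      define v where "v = (\<lambda>x. w x + h * d x)"
      have v: "v \<in> L2 \<Omega>" unfolding v_def using L2_lincomb[OF w d, of 1 h] by simp
      have v_w: "(\<lambda>x. v x - w x) = (\<lambda>x. h * d x)" unfolding v_def by simp
      have "\<bar>h\<bar> * nd \<le> \<bar>h\<bar> * (nd + 1)" by (simp add: mult_left_mono)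
      also have "\<bar>h\<bar> * (nd + 1) < \<delta>" using h nd0 by (simp add: field_simps)
      finally have close: "l2_norm \<Omega> (\<lambda>x. v x - w x) < \<delta>" unfolding v_w l2_norm_scale nd_def .
      have "\<bar>f v - f w - h * D\<bar> \<le> e * (\<bar>h\<bar> * nd)"
        using remainder[OF v close] unfolding v_w l2_norm_scale l2_inner_scale_right D_def nd_def .
      then have "\<bar>(f v - f w) / h - D\<bar> \<le> e * nd"
        using h by (simp add: field_simps abs_divide abs_mult)
      also have "e * nd < \<epsilon>"
      proof -
        have "0 < \<epsilon> * nd + \<epsilon> * 2" using \<open>\<epsilon> > 0\<close> nd0 by (simp add: add_nonneg_pos)
        then show ?thesis using \<open>\<epsilon> > 0\<close> nd0 unfolding e_def by (simp add: field_simps)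
      qed
      finally show "dist ((f (\<lambda>x. w x + (0 + h) * d x) - f (\<lambda>x. w x + 0 * d x)) / h) D < \<epsilon>"
        by (simp add: dist_real_def v_def)
    qed
  qed
qed

lemma line_derivative:
  assumes u: "u \<in> L2 \<Omega>" and d: "d \<in> L2 \<Omega>"
  shows "((\<lambda>t. f (\<lambda>x. u x + t * d x)) has_real_derivative l2_inner \<Omega> (g (\<lambda>x. u x + s * d x)) d) (at s)"
proof -
  have "(\<lambda>x. u x + s * d x) \<in> L2 \<Omega>" using L2_lincomb[OF u d, of 1 s] by simp
  then have "((\<lambda>h. f (\<lambda>x. (u x + s * d x) + h * d x)) has_real_derivative
      l2_inner \<Omega> (g (\<lambda>x. u x + s * d x)) d) (at 0)"
    by (rule frechet_line_derivative[OF _ d])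
  moreover have "(\<lambda>x. (u x + s * d x) + h * d x) = (\<lambda>x. u x + (h + s) * d x)" for h
    by (auto simp: algebra_simps)
  ultimately have "((\<lambda>h. f (\<lambda>x. u x + (h + s) * d x)) has_real_derivative
      l2_inner \<Omega> (g (\<lambda>x. u x + s * d x)) d) (at 0)" by simp
  then show ?thesis using DERIV_shift[of "\<lambda>t. f (\<lambda>x. u x + t * d x)" _ 0 s] by simp
qed

lemma gradient_increment_inner_le:
  assumes u: "u \<in> L2 \<Omega>" and d: "d \<in> L2 \<Omega>" and s: "s \<ge> 0"
  shows "l2_inner \<Omega> (g (\<lambda>x. u x + s * d x)) d - l2_inner \<Omega> (g u) d \<le> Lf * s * sq_integral \<Omega> d"
proof -
  define z where "z = (\<lambda>x. u x + s * d x)"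
  have z: "z \<in> L2 \<Omega>" unfolding z_def using L2_lincomb[OF u d, of 1 s] by simp
  have "l2_inner \<Omega> (g z) d - l2_inner \<Omega> (g u) d = l2_inner \<Omega> (\<lambda>x. g z x - g u x) d"
    using l2_inner_diff_left[OF d gradient_L2[OF z] gradient_L2[OF u]] by simp
  also have "\<dots> \<le> l2_norm \<Omega> (\<lambda>x. g z x - g u x) * l2_norm \<Omega> d"
    using l2_cauchy_schwarz[OF L2_diff[OF gradient_L2[OF z] gradient_L2[OF u]] d]
    by (rule order_trans[OF abs_ge_self])
  also have "\<dots> \<le> (Lf * l2_norm \<Omega> (\<lambda>x. z x - u x)) * l2_norm \<Omega> d"
    by (intro mult_right_mono gradient_lipschitz z u l2_norm_nonneg)
  also have "(\<lambda>x. z x - u x) = (\<lambda>x. s * d x)" unfolding z_def by simp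
  also have "(Lf * l2_norm \<Omega> (\<lambda>x. s * d x)) * l2_norm \<Omega> d = Lf * s * sq_integral \<Omega> d"
    unfolding l2_norm_scale l2_norm_power2[symmetric] using s by (simp add: power2_eq_square)
  finally show ?thesis unfolding z_def .
qed

lemma descent_lemma:
  assumes u: "u \<in> L2 \<Omega>" and v: "v \<in> L2 \<Omega>"
  shows "f v \<le> f u + l2_inner \<Omega> (g u) (\<lambda>x. v x - u x) + Lf / 2 * sq_integral \<Omega> (\<lambda>x. v x - u x)"
proof -
  define d where "d = (\<lambda>x. v x - u x)"
  have d: "d \<in> L2 \<Omega>" unfolding d_def using L2_diff[OF v u] .
  define \<psi> where "\<psi> = (\<lambda>s. f (\<lambda>x. u x + s * d x) - s * l2_inner \<Omega> (g u) d - Lf / 2 * s\<^sup>2 * sq_integral \<Omega> d)"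
  have "\<psi> 1 \<le> \<psi> 0"
  proof (rule DERIV_nonpos_imp_nonincreasing[of 0 1 \<psi>])
    fix s :: real assume s: "0 \<le> s" "s \<le> 1"
    have "(\<psi> has_real_derivative (l2_inner \<Omega> (g (\<lambda>x. u x + s * d x)) d - l2_inner \<Omega> (g u) d
        - Lf / 2 * (2 * s) * sq_integral \<Omega> d)) (at s)"
      unfolding \<psi>_def by (rule derivative_eq_intros line_derivative[OF u d] | simp)+
    moreover have "l2_inner \<Omega> (g (\<lambda>x. u x + s * d x)) d - l2_inner \<Omega> (g u) d
        \<le> Lf / 2 * (2 * s) * sq_integral \<Omega> d"
      using gradient_increment_inner_le[OF u d s(1)] by simp
    ultimately show "\<exists>y. (\<psi> has_real_derivative y) (at s) \<and> y \<le> 0" by force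
  qed simp
  then show ?thesis unfolding \<psi>_def d_def by simp
qed

end

section \<open>The scalar subproblem\<close>

text \<open>
  For \<open>c = L (w - s) - g\<close>, \<open>scalar_gap L \<alpha> \<beta> p s c t\<close> is \<open>\<phi> t - \<phi> s\<close> for the pointwise objective
  \<open>\<phi> t = g (t - w) + L/2 (t - w)\<^sup>2 + \<alpha>/2 t\<^sup>2 + \<beta> \<bar>t\<bar>\<^sup>p\<close> of the subproblem; hence
  \<open>s \<in> scalar_minimizers L \<alpha> \<beta> p b c\<close> says that \<open>s\<close> minimises \<open>\<phi>\<close> on \<open>[-b, b]\<close>.
\<close>

definition scalar_gap :: "real \<Rightarrow> real \<Rightarrow> real \<Rightarrow> real \<Rightarrow> real \<Rightarrow> real \<Rightarrow> real \<Rightarrow> real" where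
  "scalar_gap L \<alpha> \<beta> p s c t =
     \<beta> * (\<bar>t\<bar> powr p - \<bar>s\<bar> powr p) + (\<alpha> * s - c) * (t - s) + (L + \<alpha>) / 2 * (t - s)\<^sup>2"

definition scalar_minimizers :: "real \<Rightarrow> real \<Rightarrow> real \<Rightarrow> real \<Rightarrow> ereal \<Rightarrow> real \<Rightarrow> real set" where
  "scalar_minimizers L \<alpha> \<beta> p b c =
     {s. ereal \<bar>s\<bar> \<le> b \<and> (\<forall>t. ereal \<bar>t\<bar> \<le> b \<longrightarrow> 0 \<le> scalar_gap L \<alpha> \<beta> p s c t)}"

definition tau :: "real \<Rightarrow> real \<Rightarrow> real \<Rightarrow> real \<Rightarrow> real" where
  "tau L \<alpha> \<beta> p = (2 * \<beta> * (1 - p) / (L + \<alpha>)) powr (1 / (2 - p))"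

text \<open>A nonzero minimiser either is interior, and then has modulus at least \<open>tau\<close>, or has modulus \<open>b\<close>.\<close>

definition min_modulus :: "real \<Rightarrow> real \<Rightarrow> real \<Rightarrow> real \<Rightarrow> ereal \<Rightarrow> real" where
  "min_modulus L \<alpha> \<beta> p b = (if b = \<infinity> then tau L \<alpha> \<beta> p else min (tau L \<alpha> \<beta> p) (real_of_ereal b))"

locale scalar_problem =
  fixes L \<alpha> \<beta> p :: real and b :: ereal
  assumes \<alpha>_pos: "\<alpha> > 0" and \<beta>_pos: "\<beta> > 0" and p_pos: "0 < p" and p_less_1: "p < 1"
    and L_pos: "L > 0" and L_bound: "L \<le> (2 / p - 1) * \<alpha>" and b_pos: "b > 0"
begin

abbreviation "M \<equiv> scalar_minimizers L \<alpha> \<beta> p b"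
abbreviation "\<tau> \<equiv> tau L \<alpha> \<beta> p"
abbreviation "m \<equiv> min_modulus L \<alpha> \<beta> p b"

lemma scalar_minimizers_iff: "s \<in> M c \<longleftrightarrow> ereal \<bar>s\<bar> \<le> b \<and> (\<forall>t. ereal \<bar>t\<bar> \<le> b \<longrightarrow>
      0 \<le> \<beta> * (\<bar>t\<bar> powr p - \<bar>s\<bar> powr p) + (\<alpha> * s - c) * (t - s) + (L + \<alpha>) / 2 * (t - s)\<^sup>2)"
  unfolding scalar_minimizers_def scalar_gap_def by simp

lemma tau_pos: "\<tau> > 0"
  unfolding tau_def using \<alpha>_pos \<beta>_pos p_less_1 L_pos by simp

lemma min_modulus_pos: "m > 0"
proof (cases b)
  case (real r) then show ?thesis using tau_pos b_pos by (simp add: min_modulus_def)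
qed (use tau_pos b_pos in \<open>auto simp: min_modulus_def\<close>)

lemma scalar_minimizers_uminus: "s \<in> M c \<Longrightarrow> -s \<in> M (-c)"
  unfolding scalar_minimizers_iff
proof (intro conjI allI impI)
  assume H: "ereal \<bar>s\<bar> \<le> b \<and> (\<forall>t. ereal \<bar>t\<bar> \<le> b \<longrightarrow>
      0 \<le> \<beta> * (\<bar>t\<bar> powr p - \<bar>s\<bar> powr p) + (\<alpha> * s - c) * (t - s) + (L + \<alpha>) / 2 * (t - s)\<^sup>2)"
  then show "ereal \<bar>- s\<bar> \<le> b" by simp
  fix t assume "ereal \<bar>t\<bar> \<le> b"
  then have "ereal \<bar>-t\<bar> \<le> b" by simp
  then have "0 \<le> \<beta> * (\<bar>-t\<bar> powr p - \<bar>s\<bar> powr p) + (\<alpha> * s - c) * (-t - s) + (L + \<alpha>) / 2 * (-t - s)\<^sup>2"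
    using H by blast
  then show "0 \<le> \<beta> * (\<bar>t\<bar> powr p - \<bar>- s\<bar> powr p) + (\<alpha> * - s - - c) * (t - - s) + (L + \<alpha>) / 2 * (t - - s)\<^sup>2"
    by (simp add: algebra_simps power2_eq_square)
qed

lemma scalar_gap_derivative:
  assumes "s > 0"
  shows "((\<lambda>t. \<beta> * (t powr p - s powr p) + (\<alpha> * s - c) * (t - s) + (L + \<alpha>) / 2 * (t - s)\<^sup>2)
     has_real_derivative (\<beta> * p * s powr (p - 1) + (\<alpha> * s - c))) (at s)"
proof -
  have d1: "((\<lambda>t. t powr p) has_real_derivative p * s powr (p - 1)) (at s)"
    by (rule has_real_derivative_powr) (use assms in simp)
  show ?thesis
    by (rule derivative_eq_intros d1 | simp)+
qed

lemma stationary_if_interior: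
  assumes sM: "s \<in> M c" and s0: "0 < s" and sb: "ereal s < b"
  shows "c = \<alpha> * s + \<beta> * p * s powr (p - 1)"
proof -
  define Q where "Q = (\<lambda>t. \<beta> * (t powr p - s powr p) + (\<alpha> * s - c) * (t - s) + (L + \<alpha>) / 2 * (t - s)\<^sup>2)"
  obtain d where d0: "d > 0" and dd: "\<And>y. \<bar>s - y\<bar> < d \<Longrightarrow> ereal \<bar>y\<bar> \<le> b \<and> y > 0"
  proof (cases b)
    case (real r)
    then have "s < r" using sb by simp
    show ?thesis
      by (rule that[of "min s (r - s)"]) (use \<open>s < r\<close> s0 real in auto)
  next
    case PInf
    show ?thesis by (rule that[of s]) (use s0 PInf in auto)
  next
    case MInf then show ?thesis using b_pos by simp
  qed
  have "\<beta> * p * s powr (p - 1) + (\<alpha> * s - c) = 0"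
  proof (rule DERIV_local_min[OF scalar_gap_derivative[OF s0, of c, folded Q_def] d0], intro allI impI)
    fix y assume "\<bar>s - y\<bar> < d"
    then have y: "ereal \<bar>y\<bar> \<le> b" "y > 0" using dd by auto
    then have "0 \<le> \<beta> * (\<bar>y\<bar> powr p - \<bar>s\<bar> powr p) + (\<alpha> * s - c) * (y - s) + (L + \<alpha>) / 2 * (y - s)\<^sup>2"
      using sM unfolding scalar_minimizers_iff by blast
    then show "Q s \<le> Q y" using y s0 by (simp add: Q_def)
  qed
  then show ?thesis by simp
qed

lemma stationary_le_if_boundary:
  assumes sM: "s \<in> M c" and s0: "0 < s" and sb: "ereal s = b"
  shows "\<alpha> * s + \<beta> * p * s powr (p - 1) \<le> c"
proof (rule ccontr)
  assume "\<not> ?thesis"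
  then have pos: "0 < \<beta> * p * s powr (p - 1) + (\<alpha> * s - c)" by simp
  define Q where "Q = (\<lambda>t. \<beta> * (t powr p - s powr p) + (\<alpha> * s - c) * (t - s) + (L + \<alpha>) / 2 * (t - s)\<^sup>2)"
  obtain d where d0: "d > 0" and dd: "\<And>h. h > 0 \<Longrightarrow> h < d \<Longrightarrow> Q (s - h) < Q s"
    using DERIV_pos_inc_left[OF scalar_gap_derivative[OF s0, of c, folded Q_def] pos] by blast
  define h where "h = min (d/2) (s/2)"
  have h: "h > 0" "h < d" "h < s" using d0 s0 by (auto simp: h_def)
  have "Q (s - h) < 0" using dd[OF h(1,2)] by (simp add: Q_def)
  moreover have "ereal \<bar>s - h\<bar> \<le> ereal s" using h by simp
  then have "ereal \<bar>s - h\<bar> \<le> b" using sb by simp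
  then have "0 \<le> \<beta> * (\<bar>s - h\<bar> powr p - \<bar>s\<bar> powr p) + (\<alpha> * s - c) * ((s - h) - s) + (L + \<alpha>) / 2 * ((s - h) - s)\<^sup>2"
    using sM unfolding scalar_minimizers_iff by blast
  then have "0 \<le> Q (s - h)" using h s0 by (simp add: Q_def)
  ultimately show False by simp
qed

lemma stationary_le_if_pos:
  assumes sM: "s \<in> M c" and s0: "0 < s"
  shows "\<alpha> * s + \<beta> * p * s powr (p - 1) \<le> c"
proof -
  have "ereal s \<le> b" using sM s0 unfolding scalar_minimizers_iff by simp
  then consider "ereal s < b" | "ereal s = b" by fastforce
  then show ?thesis
    using stationary_if_interior[OF sM s0] stationary_le_if_boundary[OF sM s0] by cases auto
qed

lemma pos_minimizer_less: "s \<in> M c \<Longrightarrow> 0 < s \<Longrightarrow> \<alpha> * s < c"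
  using stationary_le_if_pos[of s c] \<beta>_pos p_pos by (smt (verit) mult_pos_pos powr_gt_zero)

text \<open>Comparing with \<open>t = 0\<close> shows that an interior minimiser cannot be too close to \<open>0\<close>.\<close>

lemma tau_le_interior_minimizer:
  assumes sM: "s \<in> M c" and s0: "0 < s" and sb: "ereal s < b"
  shows "\<tau> \<le> s"
proof -
  have c: "c = \<alpha> * s + \<beta> * p * s powr (p - 1)" by (rule stationary_if_interior[OF assms])
  have "ereal \<bar>0\<bar> \<le> b" using b_pos unfolding zero_ereal_def by (simp add: less_imp_le)
  then have "0 \<le> \<beta> * (\<bar>0\<bar> powr p - \<bar>s\<bar> powr p) + (\<alpha> * s - c) * (0 - s) + (L + \<alpha>) / 2 * (0 - s)\<^sup>2"
    using sM unfolding scalar_minimizers_iff by blast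
  moreover have "s powr (p - 1) * s = s powr p"
    using s0 powr_add[of s "p - 1" 1] by simp
  moreover have sq: "s\<^sup>2 = s powr p * s powr (2 - p)"
    using s0 powr_add[of s p "2 - p"] by (simp add: powr_numeral)
  ultimately have "0 \<le> - \<beta> * s powr p + \<beta> * p * s powr p + (L + \<alpha>) / 2 * (s powr p * s powr (2 - p))"
    using s0 p_pos by (simp add: c algebra_simps power2_eq_square)
  then have "0 \<le> s powr p * (- \<beta> * (1 - p) + (L + \<alpha>) / 2 * s powr (2 - p))"
    by (simp add: algebra_simps)
  then have "0 \<le> - \<beta> * (1 - p) + (L + \<alpha>) / 2 * s powr (2 - p)"
    using s0 by (simp add: zero_le_mult_iff)
  then have K: "2 * \<beta> * (1 - p) / (L + \<alpha>) \<le> s powr (2 - p)"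
    using L_pos \<alpha>_pos by (simp add: field_simps)
  have "\<tau> \<le> (s powr (2 - p)) powr (1 / (2 - p))"
    unfolding tau_def by (rule powr_mono2) (use K p_less_1 \<beta>_pos L_pos \<alpha>_pos in auto)
  also have "\<dots> = s" using p_less_1 s0 by (simp add: powr_powr)
  finally show ?thesis .
qed

lemma min_modulus_le_pos_minimizer:
  assumes sM: "s \<in> M c" and s0: "0 < s"
  shows "m \<le> s"
proof -
  have "ereal s \<le> b" using sM s0 unfolding scalar_minimizers_iff by simp
  then consider "ereal s < b" | "ereal s = b" by fastforce
  then show ?thesis
  proof cases
    case 1
    then have "\<tau> \<le> s" by (rule tau_le_interior_minimizer[OF sM s0])
    then show ?thesis by (auto simp: min_modulus_def)
  qed (auto simp: min_modulus_def)
qed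

lemma tau_powr: "\<tau> powr (p - 2) = (L + \<alpha>) / (2 * \<beta> * (1 - p))"
proof -
  define K where "K = 2 * \<beta> * (1 - p) / (L + \<alpha>)"
  have K: "K > 0" unfolding K_def using \<beta>_pos p_less_1 L_pos \<alpha>_pos by simp
  have "\<tau> powr (p - 2) = K powr (1 / (2 - p) * (p - 2))"
    unfolding tau_def K_def[symmetric] by (simp add: powr_powr)
  also have "1 / (2 - p) * (p - 2) = -1" using p_less_1 by (simp add: field_simps)
  also have "K powr -1 = 1 / K" using K by (simp add: powr_minus divide_inverse)
  finally show ?thesis by (simp add: K_def)
qed

text \<open>This is where \<open>L \<le> (2/p - 1) \<alpha>\<close> is needed: it makes \<open>\<alpha> s + \<beta> p s\<^bsup>p-1\<^esup>\<close> increasing on \<open>[\<tau>, \<infinity>)\<close>.\<close>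

lemma stationary_map_derivative_pos:
  assumes "\<tau> < x"
  shows "0 < \<alpha> + \<beta> * p * ((p - 1) * x powr (p - 2))"
proof -
  have "x powr (p - 2) < \<tau> powr (p - 2)"
    by (rule powr_less_mono2_neg) (use p_less_1 tau_pos assms in auto)
  then have "\<beta> * p * (1 - p) * x powr (p - 2) < \<beta> * p * (1 - p) * \<tau> powr (p - 2)"
    using \<beta>_pos p_pos p_less_1 by (intro mult_strict_left_mono) auto
  also have "\<beta> * p * (1 - p) * \<tau> powr (p - 2) = p * (L + \<alpha>) / 2"
    unfolding tau_powr using \<beta>_pos p_less_1 by (simp add: field_simps)
  also have "\<dots> \<le> \<alpha>"
  proof -
    have "p * L \<le> p * ((2 / p - 1) * \<alpha>)" using L_bound p_pos by (intro mult_left_mono) auto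
    also have "\<dots> = 2 * \<alpha> - p * \<alpha>" using p_pos by (simp add: field_simps)
    finally show ?thesis by (simp add: field_simps)
  qed
  finally show ?thesis by (simp add: algebra_simps)
qed

lemma stationary_map_strict_mono:
  assumes \<tau>_le: "\<tau> \<le> s1" and less: "s1 < s2"
  shows "\<alpha> * s1 + \<beta> * p * s1 powr (p - 1) < \<alpha> * s2 + \<beta> * p * s2 powr (p - 1)"
proof -
  define h where "h = (\<lambda>x. \<alpha> * x + \<beta> * p * x powr (p - 1))"
  have s1_pos: "s1 > 0" using tau_pos \<tau>_le by simp
  have h_deriv: "(h has_real_derivative (\<alpha> + \<beta> * p * ((p - 1) * x powr (p - 2)))) (at x)" if "x > 0" for x
  proof -
    have powr_deriv: "((\<lambda>t. t powr (p - 1)) has_real_derivative (p - 1) * x powr (p - 2)) (at x)"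
      using has_real_derivative_powr[OF that, of "p - 1"] by (simp add: diff_diff_eq)
    show ?thesis unfolding h_def by (rule derivative_eq_intros powr_deriv | simp)+
  qed
  have "h s1 < h s2"
  proof (rule DERIV_pos_imp_increasing_open[OF less])
    fix x assume "s1 < x"
    then have "x > 0" "\<tau> < x" using \<tau>_le s1_pos by auto
    then show "\<exists>y. (h has_real_derivative y) (at x) \<and> 0 < y"
      using h_deriv stationary_map_derivative_pos by blast
  next
    show "continuous_on {s1..s2} h"
    proof (rule DERIV_atLeastAtMost_imp_continuous_on)
      fix x assume "s1 \<le> x"
      then have "x > 0" using s1_pos by simp
      then show "\<exists>y. (h has_real_derivative y) (at x)" using h_deriv by blast
    qed
  qed
  then show ?thesis unfolding h_def .
qed

lemma pos_minimizer_unique: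
  assumes "s1 \<in> M c" "s2 \<in> M c" "0 < s1" "0 < s2"
  shows "s1 = s2"
proof -
  have ordered: False if s1: "s1 \<in> M c" and s2: "s2 \<in> M c" and pos: "0 < s1" and lt: "s1 < s2" for s1 s2
  proof -
    have "ereal s2 \<le> b" using s2 pos lt unfolding scalar_minimizers_iff by simp
    moreover have "ereal s1 < ereal s2" using lt by simp
    ultimately have s1b: "ereal s1 < b" by (rule order_less_le_trans[rotated])
    have "\<alpha> * s1 + \<beta> * p * s1 powr (p - 1) < \<alpha> * s2 + \<beta> * p * s2 powr (p - 1)"
      by (rule stationary_map_strict_mono[OF tau_le_interior_minimizer[OF s1 pos s1b] lt])
    then show False
      using stationary_if_interior[OF s1 pos s1b] stationary_le_if_pos[OF s2] pos lt by simp
  qed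
  show ?thesis
    using ordered[OF assms(1,2,3)] ordered[OF assms(2,1,4)] by (cases s1 s2 rule: linorder_cases) simp_all
qed

lemma scalar_minimizers_closed:
  assumes S: "S \<longlonglongrightarrow> s" and C: "C \<longlonglongrightarrow> c" and SM: "\<And>n. S n \<in> M (C n)" and s0: "s \<noteq> 0"
  shows "s \<in> M c"
  unfolding scalar_minimizers_iff
proof (intro conjI allI impI)
  show "ereal \<bar>s\<bar> \<le> b"
  proof (cases b)
    case (real r)
    have "\<bar>S n\<bar> \<le> r" for n using SM[of n] real unfolding scalar_minimizers_iff by simp
    then have "\<bar>s\<bar> \<le> r" by (intro LIMSEQ_le_const2[OF tendsto_rabs[OF S]]) auto
    then show ?thesis using real by simp
  qed (use b_pos in auto)
  fix t assume t: "ereal \<bar>t\<bar> \<le> b"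
  \<comment> \<open>The hypothesis \<open>s \<noteq> 0\<close> serves the continuity rule for \<open>powr\<close>.\<close>
  have "(\<lambda>n. \<beta> * (\<bar>t\<bar> powr p - \<bar>S n\<bar> powr p) + (\<alpha> * S n - C n) * (t - S n) + (L + \<alpha>) / 2 * (t - S n)\<^sup>2)
     \<longlonglongrightarrow> \<beta> * (\<bar>t\<bar> powr p - \<bar>s\<bar> powr p) + (\<alpha> * s - c) * (t - s) + (L + \<alpha>) / 2 * (t - s)\<^sup>2"
    using s0 by (intro tendsto_intros S C) auto
  moreover have "\<And>n. 0 \<le> \<beta> * (\<bar>t\<bar> powr p - \<bar>S n\<bar> powr p) + (\<alpha> * S n - C n) * (t - S n) + (L + \<alpha>) / 2 * (t - S n)\<^sup>2"
    using SM t unfolding scalar_minimizers_iff by blast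
  ultimately show "0 \<le> \<beta> * (\<bar>t\<bar> powr p - \<bar>s\<bar> powr p) + (\<alpha> * s - c) * (t - s) + (L + \<alpha>) / 2 * (t - s)\<^sup>2"
    by (intro LIMSEQ_le_const) auto
qed

lemma pos_minimizers_convergent:
  assumes C: "C \<longlonglongrightarrow> c" and SM: "\<And>n. S n \<in> M (C n)" and S_pos: "\<And>n. S n > 0"
  shows "convergent S"
proof -
  obtain K where K: "\<And>n. norm (C n) \<le> K"
    using convergent_imp_Bseq[OF convergentI[OF C]] unfolding Bseq_def by blast
  have "\<bar>S n\<bar> \<le> K / \<alpha>" for n
    using pos_minimizer_less[OF SM S_pos, of n] K[of n] S_pos[of n] \<alpha>_pos by (simp add: field_simps)
  then have bounded: "bounded (range (S \<circ> r))" for r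
    unfolding bounded_real by auto
  \<comment> \<open>Every subsequential limit is a positive minimiser for \<open>c\<close>, because the \<open>S n\<close> stay above \<open>m\<close>.\<close>
  have limit: "l \<in> M c \<and> l > 0" if r: "strict_mono r" and l: "(S \<circ> r) \<longlonglongrightarrow> l" for r l
  proof -
    have "m \<le> l"
      using min_modulus_le_pos_minimizer[OF SM S_pos] l by (intro LIMSEQ_le_const) auto
    then have "l > 0" using min_modulus_pos by simp
    moreover have "l \<in> M c"
      by (rule scalar_minimizers_closed[OF l LIMSEQ_subseq_LIMSEQ[OF C r]]) (use SM \<open>l > 0\<close> in auto)
    ultimately show ?thesis by simp
  qed
  obtain l r where "strict_mono r" "(S \<circ> r) \<longlonglongrightarrow> l"
    using bounded_imp_convergent_subsequence[OF bounded[of id]] by auto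
  then have l: "l \<in> M c" "l > 0" using limit by auto
  have "S \<longlonglongrightarrow> l"
    by (rule LIMSEQ_if_bounded_and_subseq_limits_eq[OF bounded[of id, simplified]])
      (use limit pos_minimizer_unique l in blast)
  then show ?thesis by (rule convergentI)
qed

lemma minimizers_convergent_if_sgn_eventually_constant:
  assumes C: "C \<longlonglongrightarrow> c" and SM: "\<And>n. n \<ge> N \<Longrightarrow> S n \<in> M (C n)"
    and sgn: "\<And>n. n \<ge> N \<Longrightarrow> sgn (S n) = sgn (S N)"
  shows "convergent S"
proof -
  define S' C' where "S' = (\<lambda>n. S (n + N))" and "C' = (\<lambda>n. C (n + N))"
  have C': "C' \<longlonglongrightarrow> c" unfolding C'_def by (rule LIMSEQ_ignore_initial_segment[OF C])
  have SM': "S' n \<in> M (C' n)" for n unfolding S'_def C'_def by (rule SM) simp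
  have sgn': "sgn (S' n) = sgn (S N)" for n unfolding S'_def by (rule sgn) simp
  have "convergent S'"
  proof (cases "S N" "0::real" rule: linorder_cases)
    case equal
    then have "S' = (\<lambda>n. 0)" using sgn' by (auto simp: sgn_0_0)
    then show ?thesis by (simp add: convergent_const)
  next
    case greater
    then show ?thesis using pos_minimizers_convergent[OF C' SM'] sgn' by (simp add: sgn_1_pos)
  next
    case less
    then have "convergent (\<lambda>n. - S' n)"
      using pos_minimizers_convergent[OF tendsto_minus[OF C'] scalar_minimizers_uminus[OF SM']] sgn'
      by (simp add: sgn_1_neg)
    then show ?thesis using convergent_minus_iff by blast
  qed
  then show ?thesis unfolding S'_def using convergent_ignore_initial_segment by blast
qed

lemma minimizer_zero_or_large:
  assumes "s \<in> M c"
  shows "s = 0 \<or> m \<le> \<bar>s\<bar>"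
proof (cases s "0::real" rule: linorder_cases)
  case less
  then have "m \<le> - s"
    using min_modulus_le_pos_minimizer[OF scalar_minimizers_uminus[OF assms]] by simp
  then show ?thesis using less by simp
qed (use min_modulus_le_pos_minimizer[OF assms] in auto)

lemma scalar_minimizer_if_rationals:
  assumes sb: "ereal \<bar>s\<bar> \<le> b"
    and rat: "\<And>r. r \<in> \<rat> \<Longrightarrow> ereal \<bar>r\<bar> \<le> b \<Longrightarrow> 0 \<le> scalar_gap L \<alpha> \<beta> p s c r"
  shows "s \<in> M c"
  unfolding scalar_minimizers_def
proof (intro CollectI conjI allI impI sb)
  fix t assume tb: "ereal \<bar>t\<bar> \<le> b"
  show "0 \<le> scalar_gap L \<alpha> \<beta> p s c t"
  proof (cases "t = 0")
    case True
    then show ?thesis using rat[of 0] tb by simp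
  next
    case False
    obtain T where T: "\<And>n. T n \<in> \<rat>" "\<And>n. \<bar>T n\<bar> \<le> \<bar>t\<bar>" "T \<longlonglongrightarrow> t"
      using rational_approximation_abs_le[of t] by blast
    have "ereal \<bar>T n\<bar> \<le> b" for n
    proof -
      have "ereal \<bar>T n\<bar> \<le> ereal \<bar>t\<bar>" using T(2)[of n] by simp
      then show ?thesis using tb by (rule order_trans)
    qed
    then have "\<And>n. 0 \<le> scalar_gap L \<alpha> \<beta> p s c (T n)" using rat T(1) by blast
    moreover have "(\<lambda>n. scalar_gap L \<alpha> \<beta> p s c (T n)) \<longlonglongrightarrow> scalar_gap L \<alpha> \<beta> p s c t"
      unfolding scalar_gap_def using False by (intro tendsto_intros T(3)) auto
    ultimately show ?thesis by (intro LIMSEQ_le_const) auto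
  qed
qed

end

section \<open>The iteration\<close>

locale prox_iteration = smooth_objective \<Omega> f g Lf + scalar_problem L \<alpha> \<beta> p b
  for \<Omega> :: "'a::euclidean_space set" and f g Lf L \<alpha> \<beta> p b +
  fixes u :: "nat \<Rightarrow> 'a \<Rightarrow> real"
  assumes completely_continuous: "completely_continuous \<Omega> g"
    and Lf_less_L: "Lf < L"
    and initial_L2: "u 0 \<in> L2 \<Omega>"
    and minimizer: "\<And>k. u (Suc k) \<in> admissible \<Omega> b \<and>
      (\<forall>v\<in>admissible \<Omega> b. subproblem_obj \<Omega> f g L \<alpha> \<beta> p (u k) (u (Suc k))
                            \<le> subproblem_obj \<Omega> f g L \<alpha> \<beta> p (u k) v)"
begin

abbreviation "obj \<equiv> subproblem_obj \<Omega> f g L \<alpha> \<beta> p"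

lemma iterate_L2: "u k \<in> L2 \<Omega>"
  by (cases k) (use initial_L2 minimizer in \<open>auto simp: admissible_def\<close>)

lemma iterate_measurable [measurable]: "u k \<in> borel_measurable (lebesgue_on \<Omega>)"
  using iterate_L2 by (rule L2_measurable)

definition powr_integral :: "('a \<Rightarrow> real) \<Rightarrow> real" where
  "powr_integral w = (LINT x|lebesgue_on \<Omega>. \<bar>w x\<bar> powr p)"

definition energy :: "('a \<Rightarrow> real) \<Rightarrow> real" where
  "energy w = f w + \<alpha> / 2 * sq_integral \<Omega> w + \<beta> * powr_integral w"

definition step :: "nat \<Rightarrow> 'a \<Rightarrow> real" where
  "step k = (\<lambda>x. u (Suc k) x - u k x)"

lemma step_L2: "step k \<in> L2 \<Omega>"
  unfolding step_def by (rule L2_diff[OF iterate_L2 iterate_L2])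

lemma subproblem_obj_expand:
  "obj w v = f w + l2_inner \<Omega> (g w) (\<lambda>x. v x - w x) + L / 2 * sq_integral \<Omega> (\<lambda>x. v x - w x)
     + \<alpha> / 2 * sq_integral \<Omega> v + \<beta> * powr_integral v"
  unfolding subproblem_obj_def powr_integral_def by (simp add: l2_norm_power2)

lemma subproblem_obj_self: "obj w w = energy w"
  unfolding subproblem_obj_expand energy_def by (simp add: l2_inner_def)

text \<open>The initial guess \<open>u 0\<close> need not be admissible, so \<open>u k\<close> is a competitor only for \<open>k \<ge> 1\<close>.\<close>

lemma sufficient_decrease:
  assumes "k \<ge> 1"
  shows "energy (u (Suc k)) + (L - Lf) / 2 * sq_integral \<Omega> (step k) \<le> energy (u k)"
proof -
  have "u k \<in> admissible \<Omega> b" using minimizer[of "k - 1"] assms by simp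
  then have "obj (u k) (u (Suc k)) \<le> obj (u k) (u k)" using minimizer[of k] by blast
  then have model: "f (u k) + l2_inner \<Omega> (g (u k)) (step k) + L / 2 * sq_integral \<Omega> (step k)
     + \<alpha> / 2 * sq_integral \<Omega> (u (Suc k)) + \<beta> * powr_integral (u (Suc k)) \<le> energy (u k)"
    unfolding subproblem_obj_self subproblem_obj_expand step_def .
  have "f (u (Suc k)) \<le> f (u k) + l2_inner \<Omega> (g (u k)) (step k) + Lf / 2 * sq_integral \<Omega> (step k)"
    unfolding step_def by (rule descent_lemma[OF iterate_L2 iterate_L2])
  moreover have "(L - Lf) / 2 * sq_integral \<Omega> (step k) = L / 2 * sq_integral \<Omega> (step k) - Lf / 2 * sq_integral \<Omega> (step k)"
    by (simp add: left_diff_distrib diff_divide_distrib)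
  ultimately show ?thesis using model unfolding energy_def by linarith
qed

lemma energy_lower_bound: "\<exists>c. \<forall>k. c \<le> energy (u k)"
proof -
  obtain c where c: "\<And>w. w \<in> L2 \<Omega> \<Longrightarrow> c \<le> f w" using bounded_below by blast
  have nonneg: "0 \<le> \<alpha> / 2 * sq_integral \<Omega> (u k) + \<beta> * powr_integral (u k)" for k
    using \<alpha>_pos \<beta>_pos by (simp add: powr_integral_def)
  have "c \<le> energy (u k)" for k
    using c[OF iterate_L2[of k]] nonneg[of k] unfolding energy_def by linarith
  then show ?thesis by blast
qed

lemma energy_telescope:
  "energy (u (Suc n)) + (L - Lf) / 2 * (\<Sum>i<n. sq_integral \<Omega> (step (Suc i))) \<le> energy (u 1)"
proof (induction n)
  case (Suc n)
  have "energy (u (Suc (Suc n))) + (L - Lf) / 2 * sq_integral \<Omega> (step (Suc n)) \<le> energy (u (Suc n))"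
    by (rule sufficient_decrease) simp
  then show ?case using Suc by (simp add: algebra_simps)
qed simp

lemma summable_step: "summable (\<lambda>k. sq_integral \<Omega> (step k))"
proof -
  obtain c where c: "\<And>k. c \<le> energy (u k)" using energy_lower_bound by blast
  have "(\<Sum>i<n. sq_integral \<Omega> (step (Suc i))) \<le> (energy (u 1) - c) / ((L - Lf) / 2)" for n
  proof -
    have "(L - Lf) / 2 * (\<Sum>i<n. sq_integral \<Omega> (step (Suc i))) \<le> energy (u 1) - c"
      using energy_telescope[of n] c[of "Suc n"] by simp
    then show ?thesis using Lf_less_L by (simp add: field_simps)
  qed
  then have "summable (\<lambda>k. sq_integral \<Omega> (step (Suc k)))"
    by (intro summableI_nonneg_bounded) auto
  then show ?thesis using summable_Suc_iff by blast
qed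

lemma iterates_bounded: "\<exists>B. \<forall>k\<ge>1. sq_integral \<Omega> (u k) \<le> B"
proof -
  obtain c where c: "\<And>w. w \<in> L2 \<Omega> \<Longrightarrow> c \<le> f w" using bounded_below by blast
  have "sq_integral \<Omega> (u k) \<le> (energy (u 1) - c) / (\<alpha> / 2)" if k: "k \<ge> 1" for k
  proof -
    have "energy (u k) \<le> energy (u 1)" using k
    proof (induction k rule: dec_induct)
      case (step n)
      have "energy (u (Suc n)) + (L - Lf) / 2 * sq_integral \<Omega> (step n) \<le> energy (u n)"
        by (rule sufficient_decrease) (use step in simp)
      moreover have "(L - Lf) / 2 * sq_integral \<Omega> (step n) \<ge> 0" using Lf_less_L by simp
      ultimately show ?case using step by linarith
    qed simp
    moreover have "0 \<le> \<beta> * powr_integral (u k)" using \<beta>_pos by (simp add: powr_integral_def)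
    ultimately have "\<alpha> / 2 * sq_integral \<Omega> (u k) \<le> energy (u 1) - c"
      using c[OF iterate_L2[of k]] unfolding energy_def by linarith
    then show ?thesis using \<alpha>_pos by (simp add: field_simps)
  qed
  then show ?thesis by blast
qed

lemma step_AE_tendsto_zero: "AE x in lebesgue_on \<Omega>. (\<lambda>k. step k x) \<longlonglongrightarrow> 0"
  by (rule AE_tendsto_zero_if_summable_square_integrals[OF L2_measurable[OF step_L2]
        L2_square_integrable[OF step_L2] summable_step])

definition pointwise_obj :: "('a \<Rightarrow> real) \<Rightarrow> real \<Rightarrow> 'a \<Rightarrow> real" where
  "pointwise_obj w t x = g w x * (t - w x) + L / 2 * (t - w x)\<^sup>2 + \<alpha> / 2 * t\<^sup>2 + \<beta> * \<bar>t\<bar> powr p"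

lemma pointwise_obj_diff:
  "pointwise_obj w t x - pointwise_obj w s x = scalar_gap L \<alpha> \<beta> p s (L * (w x - s) - g w x) t"
  unfolding pointwise_obj_def scalar_gap_def by (simp add: field_simps power2_eq_square)

lemma subproblem_obj_eq_integral:
  assumes w: "w \<in> L2 \<Omega>" and v: "v \<in> L2 \<Omega>"
  shows "integrable (lebesgue_on \<Omega>) (\<lambda>x. pointwise_obj w (v x) x)"
    and "obj w v = f w + (LINT x|lebesgue_on \<Omega>. pointwise_obj w (v x) x)"
proof -
  have i1: "integrable (lebesgue_on \<Omega>) (\<lambda>x. g w x * (v x - w x))"
    by (rule L2_mult_integrable[OF gradient_L2[OF w] L2_diff[OF v w]])
  have i2: "integrable (lebesgue_on \<Omega>) (\<lambda>x. L / 2 * (v x - w x)\<^sup>2)"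
    using L2_square_integrable[OF L2_diff[OF v w]] by simp
  have i3: "integrable (lebesgue_on \<Omega>) (\<lambda>x. \<alpha> / 2 * (v x)\<^sup>2)"
    using L2_square_integrable[OF v] by simp
  have i4: "integrable (lebesgue_on \<Omega>) (\<lambda>x. \<beta> * \<bar>v x\<bar> powr p)"
    using abs_powr_integrable[OF v] p_pos p_less_1 by simp
  show "integrable (lebesgue_on \<Omega>) (\<lambda>x. pointwise_obj w (v x) x)"
    unfolding pointwise_obj_def using i1 i2 i3 i4 by (intro Bochner_Integration.integrable_add)
  have "(LINT x|lebesgue_on \<Omega>. pointwise_obj w (v x) x) =
      (LINT x|lebesgue_on \<Omega>. g w x * (v x - w x)) + (LINT x|lebesgue_on \<Omega>. L / 2 * (v x - w x)\<^sup>2)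
      + (LINT x|lebesgue_on \<Omega>. \<alpha> / 2 * (v x)\<^sup>2) + (LINT x|lebesgue_on \<Omega>. \<beta> * \<bar>v x\<bar> powr p)"
    unfolding pointwise_obj_def using i1 i2 i3 i4 by (simp add: Bochner_Integration.integrable_add)
  then show "obj w v = f w + (LINT x|lebesgue_on \<Omega>. pointwise_obj w (v x) x)"
    unfolding subproblem_obj_expand powr_integral_def l2_inner_def by simp
qed

text \<open>
  Replacing \<open>u (Suc k)\<close> by the constant \<open>r\<close> on the set where this lowers the pointwise objective
  gives an admissible competitor; global minimality forces that set to be null.
\<close>

lemma iterate_pointwise_le:
  assumes r: "ereal \<bar>r\<bar> \<le> b"
  shows "AE x in lebesgue_on \<Omega>. pointwise_obj (u k) (u (Suc k) x) x \<le> pointwise_obj (u k) r x"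
proof -
  define w s where "w = u k" and "s = u (Suc k)"
  have w: "w \<in> L2 \<Omega>" and s: "s \<in> L2 \<Omega>" unfolding w_def s_def by (rule iterate_L2)+
  have [measurable]: "w \<in> borel_measurable (lebesgue_on \<Omega>)" "s \<in> borel_measurable (lebesgue_on \<Omega>)"
    "g w \<in> borel_measurable (lebesgue_on \<Omega>)"
    using w s gradient_L2[OF w] by (auto intro: L2_measurable)
  define A where "A = {x \<in> space (lebesgue_on \<Omega>). pointwise_obj w r x < pointwise_obj w (s x) x}"
  have [measurable]: "A \<in> sets (lebesgue_on \<Omega>)" unfolding A_def pointwise_obj_def by measurable
  define v where "v = (\<lambda>x. if x \<in> A then r else s x)"
  have v_adm: "v \<in> admissible \<Omega> b"
    unfolding v_def using minimizer[of k] r by (intro admissible_patch) (auto simp: s_def)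
  then have v: "v \<in> L2 \<Omega>" by (simp add: admissible_def)
  have "obj w s \<le> obj w v" using minimizer[of k] v_adm unfolding w_def s_def by blast
  then have le: "(LINT x|lebesgue_on \<Omega>. pointwise_obj w (s x) x) \<le> (LINT x|lebesgue_on \<Omega>. pointwise_obj w (v x) x)"
    unfolding subproblem_obj_eq_integral(2)[OF w s] subproblem_obj_eq_integral(2)[OF w v] by simp
  define h where "h = (\<lambda>x. pointwise_obj w (s x) x - pointwise_obj w (v x) x)"
  have h_int: "integrable (lebesgue_on \<Omega>) h"
    unfolding h_def using subproblem_obj_eq_integral(1)[OF w s] subproblem_obj_eq_integral(1)[OF w v] by simp
  have h_nonneg: "AE x in lebesgue_on \<Omega>. 0 \<le> h x"
    by (intro AE_I2) (auto simp: h_def v_def A_def)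
  have "(LINT x|lebesgue_on \<Omega>. h x) \<le> 0"
    unfolding h_def using le subproblem_obj_eq_integral(1)[OF w s] subproblem_obj_eq_integral(1)[OF w v] by simp
  moreover have "(LINT x|lebesgue_on \<Omega>. h x) \<ge> 0" using h_nonneg by (rule integral_nonneg_AE)
  ultimately have "AE x in lebesgue_on \<Omega>. h x = 0"
    using integral_nonneg_eq_0_iff_AE[OF h_int h_nonneg] by simp
  moreover have "AE x in lebesgue_on \<Omega>. x \<in> \<Omega>" by (rule AE_I2) simp
  ultimately show ?thesis
  proof eventually_elim
    case (elim x)
    then show ?case
      by (cases "x \<in> A") (auto simp: h_def v_def A_def w_def s_def)
  qed
qed

definition multiplier :: "nat \<Rightarrow> 'a \<Rightarrow> real" where
  "multiplier k x = L * (u k x - u (Suc k) x) - g (u k) x"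

lemma iterates_pointwise_minimizers:
  "AE x in lebesgue_on \<Omega>. \<forall>k. u (Suc k) x \<in> M (multiplier k x)"
proof -
  have "AE x in lebesgue_on \<Omega>. u (Suc k) x \<in> M (multiplier k x)" for k
  proof -
    define X where "X = {r \<in> \<rat>. ereal \<bar>r\<bar> \<le> b}"
    have "countable X" unfolding X_def using countable_rat by (rule countable_subset[rotated]) auto
    then have "AE x in lebesgue_on \<Omega>. \<forall>r\<in>X. pointwise_obj (u k) (u (Suc k) x) x \<le> pointwise_obj (u k) r x"
      using iterate_pointwise_le unfolding X_def by (subst AE_ball_countable) auto
    moreover have "AE x in lebesgue_on \<Omega>. ereal \<bar>u (Suc k) x\<bar> \<le> b"
      using minimizer[of k] unfolding admissible_def by blast
    ultimately show ?thesis
    proof eventually_elim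
      case (elim x)
      show ?case
      proof (rule scalar_minimizer_if_rationals[OF elim(2)])
        fix r assume "r \<in> \<rat>" "ereal \<bar>r\<bar> \<le> b"
        then have "0 \<le> pointwise_obj (u k) r x - pointwise_obj (u k) (u (Suc k) x) x"
          using elim(1) unfolding X_def by auto
        then show "0 \<le> scalar_gap L \<alpha> \<beta> p (u (Suc k) x) (multiplier k x) r"
          unfolding pointwise_obj_diff multiplier_def .
      qed
    qed
  qed
  then show ?thesis by (simp add: AE_all_countable)
qed

lemma AE_sgn_eventually_constant:
  "AE x in lebesgue_on \<Omega>. \<exists>N. \<forall>n\<ge>N. sgn (u n x) = sgn (u N x)"
  using iterates_pointwise_minimizers step_AE_tendsto_zero
proof eventually_elim
  case (elim x)
  have "u k x = 0 \<or> m \<le> \<bar>u k x\<bar>" if "k \<ge> 1" for k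
    using elim(1) minimizer_zero_or_large that by (cases k) auto
  then show ?case
    using eventually_sgn_constant[OF _ min_modulus_pos, of "\<lambda>k. u k x"] elim(2)
    unfolding step_def by blast
qed

lemma AE_convergent_if_gradient_AE_tendsto:
  assumes \<sigma>: "strict_mono \<sigma>" and gradient: "AE x in lebesgue_on \<Omega>. (\<lambda>n. g (u (\<sigma> n)) x) \<longlonglongrightarrow> G x"
  shows "AE x in lebesgue_on \<Omega>. convergent (\<lambda>n. u (Suc (\<sigma> n)) x)"
  using iterates_pointwise_minimizers step_AE_tendsto_zero AE_sgn_eventually_constant gradient
proof eventually_elim
  case (elim x)
  obtain N where N: "\<And>n. n \<ge> N \<Longrightarrow> sgn (u n x) = sgn (u N x)" using elim(3) by blast
  have "(\<lambda>n. step (\<sigma> n) x) \<longlonglongrightarrow> 0"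
    using LIMSEQ_subseq_LIMSEQ[OF elim(2) \<sigma>] by (simp add: o_def)
  then have "(\<lambda>n. L * (- step (\<sigma> n) x) - g (u (\<sigma> n)) x) \<longlonglongrightarrow> L * (- 0) - G x"
    by (intro tendsto_intros elim(4))
  then have C: "(\<lambda>n. multiplier (\<sigma> n) x) \<longlonglongrightarrow> - G x"
    by (simp add: multiplier_def step_def)
  have sgn: "sgn (u (Suc (\<sigma> n)) x) = sgn (u (Suc (\<sigma> N)) x)" if "n \<ge> N" for n
    using N[of "Suc (\<sigma> n)"] N[of "Suc (\<sigma> N)"] seq_suble[OF \<sigma>, of n] seq_suble[OF \<sigma>, of N] that
    by simp
  show ?case
  proof (rule minimizers_convergent_if_sgn_eventually_constant[OF C, of N])
    show "u (Suc (\<sigma> n)) x \<in> M (multiplier (\<sigma> n) x)" for n using elim(1) by simp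
  qed (rule sgn)
qed

lemma L1_limit_if_AE_convergent:
  assumes q: "\<And>n. 1 \<le> q n" and conv: "AE x in lebesgue_on \<Omega>. convergent (\<lambda>n. u (q n) x)"
  obtains V where "V \<in> L2 \<Omega>" "(\<lambda>n. LINT x|lebesgue_on \<Omega>. \<bar>u (q n) x - V x\<bar>) \<longlonglongrightarrow> 0"
proof -
  define V where "V = (\<lambda>x. lim (\<lambda>n. u (q n) x))"
  have lim: "AE x in lebesgue_on \<Omega>. (\<lambda>n. u (q n) x) \<longlonglongrightarrow> V x"
    using conv by (rule eventually_mono) (simp add: V_def convergent_LIMSEQ_iff)
  have [measurable]: "V \<in> borel_measurable (lebesgue_on \<Omega>)" unfolding V_def by measurable
  obtain B where B: "\<And>k. k \<ge> 1 \<Longrightarrow> sq_integral \<Omega> (u k) \<le> B" using iterates_bounded by blast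
  have "integrable (lebesgue_on \<Omega>) (\<lambda>x. (V x)\<^sup>2)"
    by (rule square_integrable_of_AE_limit[OF _ _ lim]) (use L2_square_integrable[OF iterate_L2] B q in auto)
  then have V: "V \<in> L2 \<Omega>" by (simp add: L2_def)
  define h where "h = (\<lambda>n x. u (q n) x - V x)"
  have h: "h n \<in> L2 \<Omega>" for n unfolding h_def by (rule L2_diff[OF iterate_L2 V])
  have "(\<integral>x. (h n x)\<^sup>2 \<partial>lebesgue_on \<Omega>) \<le> 2 * B + 2 * sq_integral \<Omega> V" for n
  proof -
    have "(\<integral>x. (h n x)\<^sup>2 \<partial>lebesgue_on \<Omega>) \<le> (\<integral>x. 2 * (u (q n) x)\<^sup>2 + 2 * (V x)\<^sup>2 \<partial>lebesgue_on \<Omega>)"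
    proof (rule integral_mono)
      show "integrable (lebesgue_on \<Omega>) (\<lambda>x. (h n x)\<^sup>2)" by (rule L2_square_integrable[OF h])
      show "integrable (lebesgue_on \<Omega>) (\<lambda>x. 2 * (u (q n) x)\<^sup>2 + 2 * (V x)\<^sup>2)"
        using L2_square_integrable[OF iterate_L2[of "q n"]] L2_square_integrable[OF V] by simp
      show "(h n x)\<^sup>2 \<le> 2 * (u (q n) x)\<^sup>2 + 2 * (V x)\<^sup>2" for x
        using zero_le_power2[of "u (q n) x + V x"] unfolding h_def by (simp add: power2_eq_square algebra_simps)
    qed
    also have "\<dots> = 2 * sq_integral \<Omega> (u (q n)) + 2 * sq_integral \<Omega> V"
      using L2_square_integrable[OF iterate_L2[of "q n"]] L2_square_integrable[OF V] by simp
    also have "\<dots> \<le> 2 * B + 2 * sq_integral \<Omega> V" using B[OF q[of n]] by simp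
    finally show ?thesis .
  qed
  moreover have "AE x in lebesgue_on \<Omega>. (\<lambda>n. h n x) \<longlonglongrightarrow> 0"
    using lim by (rule eventually_mono) (auto simp: h_def intro: tendsto_eq_intros)
  ultimately have "(\<lambda>n. \<integral>x. \<bar>h n x\<bar> \<partial>lebesgue_on \<Omega>) \<longlonglongrightarrow> 0"
    by (intro tendsto_L1_if_AE_tendsto_and_square_bounded[OF finite_measure_on L2_measurable[OF h]
          _ L2_square_integrable[OF h]])
  then show ?thesis using that V unfolding h_def by blast
qed

lemma gradient_AE_tendsto_subseq:
  assumes weak: "weak_conv_L2 \<Omega> vs w"
  obtains \<rho> where "strict_mono \<rho>" "AE x in lebesgue_on \<Omega>. (\<lambda>n. g (vs (\<rho> n)) x) \<longlonglongrightarrow> g w x"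
proof -
  have vs: "\<And>n. vs n \<in> L2 \<Omega>" and w: "w \<in> L2 \<Omega>" using weak unfolding weak_conv_L2_def by auto
  define h where "h = (\<lambda>n x. g (vs n) x - g w x)"
  have h: "h n \<in> L2 \<Omega>" for n unfolding h_def by (rule L2_diff[OF gradient_L2[OF vs] gradient_L2[OF w]])
  have "(\<lambda>n. l2_norm \<Omega> (h n)) \<longlonglongrightarrow> 0"
    using completely_continuous weak unfolding completely_continuous_def h_def by blast
  then have "(\<lambda>n. l2_norm \<Omega> (h n) * l2_norm \<Omega> (\<lambda>x. 1)) \<longlonglongrightarrow> 0"
    by (rule tendsto_mult_left_zero)
  then have "(\<lambda>n. \<integral>x. norm (h n x) \<partial>lebesgue_on \<Omega>) \<longlonglongrightarrow> 0"
  proof (rule Lim_null_comparison[rotated])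
    show "\<forall>\<^sub>F n in sequentially. norm (\<integral>x. norm (h n x) \<partial>lebesgue_on \<Omega>) \<le> l2_norm \<Omega> (h n) * l2_norm \<Omega> (\<lambda>x. 1)"
      using integral_abs_le_l2_norm[OF h] by (intro always_eventually allI) simp
  qed
  then obtain \<rho> :: "nat \<Rightarrow> nat" where \<rho>: "strict_mono \<rho>"
    and h_AE: "AE x in lebesgue_on \<Omega>. (\<lambda>n. h (\<rho> n) x) \<longlonglongrightarrow> 0"
    using tendsto_L1_AE_subseq[of "lebesgue_on \<Omega>" h] L2_integrable[OF h] by blast
  have "AE x in lebesgue_on \<Omega>. (\<lambda>n. g (vs (\<rho> n)) x) \<longlonglongrightarrow> g w x"
    using h_AE by (rule eventually_mono) (simp add: h_def LIM_zero_cancel)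
  then show ?thesis using that \<rho> by blast
qed

text \<open>
  With \<open>\<sigma> n = r (n + 1) - 1\<close> the iterates \<open>u (\<sigma> n + 1)\<close> form a subsequence of \<open>u \<circ> r\<close>, and since
  the steps vanish in \<open>L\<^sup>2\<close> the preceding iterates \<open>u (\<sigma> n)\<close> have the same weak limit.
\<close>

lemma weak_conv_preceding_iterates:
  assumes r: "strict_mono r" and weak: "weak_conv_L2 \<Omega> (u \<circ> r) us"
  obtains \<sigma> where "strict_mono \<sigma>" "weak_conv_L2 \<Omega> (\<lambda>n. u (\<sigma> n)) us"
    "weak_conv_L2 \<Omega> (\<lambda>n. u (Suc (\<sigma> n))) us"
proof -
  define \<sigma> where "\<sigma> = (\<lambda>n. r (Suc n) - 1)"
  have Suc_\<sigma>: "Suc (\<sigma> n) = r (Suc n)" for n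
    unfolding \<sigma>_def using seq_suble[OF r, of "Suc n"] by simp
  have \<sigma>: "strict_mono \<sigma>"
  proof (rule strict_monoI)
    fix m n :: nat assume "m < n"
    then have "r (Suc m) < r (Suc n)" using r by (simp add: strict_mono_less)
    then show "\<sigma> m < \<sigma> n" using Suc_\<sigma>[of m] Suc_\<sigma>[of n] by simp
  qed
  have weak_Suc: "weak_conv_L2 \<Omega> (\<lambda>n. u (Suc (\<sigma> n))) us"
    using weak_conv_L2_subseq[OF weak, of Suc] by (simp add: o_def Suc_\<sigma> strict_mono_Suc_iff)
  have "(\<lambda>n. sq_integral \<Omega> (step (\<sigma> n))) \<longlonglongrightarrow> 0"
    using LIMSEQ_subseq_LIMSEQ[OF summable_LIMSEQ_zero[OF summable_step] \<sigma>] by (simp add: o_def)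
  then have "weak_conv_L2 \<Omega> (\<lambda>n. u (\<sigma> n)) us"
    by (intro weak_conv_L2_perturb[OF weak_Suc iterate_L2]) (simp add: step_def power2_commute)
  then show ?thesis using that \<sigma> weak_Suc by blast
qed

lemma weak_limit_point_is_L1_limit_point:
  assumes r: "strict_mono r" and weak: "weak_conv_L2 \<Omega> (u \<circ> r) us"
  shows "\<exists>r'. strict_mono r' \<and> (\<lambda>k. l1_dist \<Omega> (u (r' k)) us) \<longlonglongrightarrow> 0"
proof -
  obtain \<sigma> where \<sigma>: "strict_mono \<sigma>" and weak_\<sigma>: "weak_conv_L2 \<Omega> (\<lambda>n. u (\<sigma> n)) us"
    and weak_Suc_\<sigma>: "weak_conv_L2 \<Omega> (\<lambda>n. u (Suc (\<sigma> n))) us"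
    using weak_conv_preceding_iterates[OF r weak] by blast
  from weak_\<sigma> obtain \<rho> where \<rho>: "strict_mono \<rho>"
    and gradient: "AE x in lebesgue_on \<Omega>. (\<lambda>n. g (u (\<sigma> (\<rho> n))) x) \<longlonglongrightarrow> g us x"
    by (rule gradient_AE_tendsto_subseq)
  define q where "q = (\<lambda>n. Suc (\<sigma> (\<rho> n)))"
  have q: "strict_mono q" using strict_mono_o[OF \<sigma> \<rho>] unfolding q_def strict_mono_def by simp
  have "AE x in lebesgue_on \<Omega>. convergent (\<lambda>n. u (q n) x)"
    using AE_convergent_if_gradient_AE_tendsto[of "\<sigma> \<circ> \<rho>" "g us"] strict_mono_o[OF \<sigma> \<rho>] gradient
    by (simp add: q_def o_def)
  moreover have "\<And>n. 1 \<le> q n" by (simp add: q_def)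
  ultimately obtain V where V: "V \<in> L2 \<Omega>"
    and L1: "(\<lambda>n. LINT x|lebesgue_on \<Omega>. \<bar>u (q n) x - V x\<bar>) \<longlonglongrightarrow> 0"
    using L1_limit_if_AE_convergent[of q] by blast
  have "weak_conv_L2 \<Omega> (\<lambda>n. u (q n)) us"
    using weak_conv_L2_subseq[OF weak_Suc_\<sigma> \<rho>] by (simp add: o_def q_def)
  then have "AE x in lebesgue_on \<Omega>. V x = us x" by (rule weak_limit_eq_L1_limit[OF _ V L1])
  moreover have "us \<in> L2 \<Omega>" using weak by (simp add: weak_conv_L2_def)
  then have [measurable]: "us \<in> borel_measurable (lebesgue_on \<Omega>)" "V \<in> borel_measurable (lebesgue_on \<Omega>)"
    using V by (auto intro: L2_measurable)
  ultimately have "l1_dist \<Omega> (u (q n)) us = (LINT x|lebesgue_on \<Omega>. \<bar>u (q n) x - V x\<bar>)" for n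
    unfolding l1_dist_def by (intro integral_cong_AE) (auto elim: eventually_mono)
  then show ?thesis using q L1 by auto
qed

end

theorem corollary5p2:
  fixes \<Omega> :: "'a::euclidean_space set"
    and f :: "('a \<Rightarrow> real) \<Rightarrow> real" and g :: "('a \<Rightarrow> real) \<Rightarrow> 'a \<Rightarrow> real"
    and Lf L \<alpha> \<beta> p :: real and b :: ereal
    and u :: "nat \<Rightarrow> 'a \<Rightarrow> real"
  assumes "\<Omega> \<in> sets lebesgue" and "emeasure lebesgue \<Omega> < \<infinity>"
    and "assumption_A \<Omega> f g Lf"
    and "completely_continuous \<Omega> g"
    and "\<alpha> > 0" and "\<beta> > 0" and "0 < p" and "p < 1" and "b > 0"
    and "Lf < L" and "L \<le> (2 / p - 1) * \<alpha>"
    and "u 0 \<in> L2 \<Omega>"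
    and "\<And>k. u (Suc k) \<in> admissible \<Omega> b \<and>
              (\<forall>v\<in>admissible \<Omega> b. subproblem_obj \<Omega> f g L \<alpha> \<beta> p (u k) (u (Suc k))
                                    \<le> subproblem_obj \<Omega> f g L \<alpha> \<beta> p (u k) v)"
  shows "\<forall>ustar. (\<exists>r. strict_mono r \<and> weak_conv_L2 \<Omega> (u \<circ> r) ustar) \<longrightarrow>
           (\<exists>r. strict_mono r \<and> (\<lambda>k. l1_dist \<Omega> (u (r k)) ustar) \<longlonglongrightarrow> 0)"
proof (intro allI impI)
  fix ustar
  assume "\<exists>r. strict_mono r \<and> weak_conv_L2 \<Omega> (u \<circ> r) ustar"
  then obtain r where r: "strict_mono r" and weak: "weak_conv_L2 \<Omega> (u \<circ> r) ustar" by blast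
  have smooth: "smooth_objective \<Omega> f g Lf"
    by (intro smooth_objective.intro smooth_objective_axioms.intro finite_domain_if_finite_emeasure assms(1-3))
  interpret smooth_objective \<Omega> f g Lf by (fact smooth)
  show "\<exists>r. strict_mono r \<and> (\<lambda>k. l1_dist \<Omega> (u (r k)) ustar) \<longlonglongrightarrow> 0"
  proof (cases "measure (lebesgue_on \<Omega>) \<Omega> = 0")
    case True
    then show ?thesis by (intro exI[of _ id]) (simp add: l1_dist_eq_0_if_null strict_mono_def)
  next
    case False
    then have "L > 0"
      using lipschitz_constant_nonneg measure_nonneg[of "lebesgue_on \<Omega>" \<Omega>] assms(10) by linarith
    then interpret prox_iteration \<Omega> f g Lf L \<alpha> \<beta> p b u
      using assms(4-13)
      by (intro prox_iteration.intro[OF smooth] scalar_problem.intro prox_iteration_axioms.intro) auto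
    show ?thesis by (rule weak_limit_point_is_L1_limit_point[OF r weak])
  qed
qed

end
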